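(* Fix a round $t$ and a common starting point $\bm{\theta}^t\in\mathbb{R}^d$. For every device $i\in[n]$ define the local noisy SGD trajectory $\bm{\theta}_i^{t\tau}=\bm{\theta}^t$, $\bm{\theta}_i^{t\tau+h+1}=\bm{\theta}_i^{t\tau+h}-\eta(g(\bm{\theta}_i^{t\tau+h})+\mathbf{b}_i^{t\tau+h})$ for $h=0,\dots,\tau-1$, where $g(\bm{\theta})=\frac1\gamma\sum_{\xi\in X}\nabla l(\bm{\theta},\xi)$ over a fresh mini-batch of $\gamma$ independent samples from $D_i$, and $\mathbf{b}_i^{t\tau+h}\sim\mathcal{N}(0,\sigma^2\mathbf{I}_d)$ are independent. Let $\Omega_t$ be a uniformly random $r$-subset of $[n]$ independent of these trajectories, and for $k=t\tau+s$ ($0\le s\le\tau-1$) let $\hat{\bm{\theta}}^k=\frac1r\sum_{i\in\Omega_t}\bm{\theta}_i^k$. Assume $\mathbb{E}[\nabla l(\mathbf{x},\xi_i)]=\nabla f_i(\mathbf{x})$ and $\mathbb{E}\|\nabla l(\mathbf{x},\xi_i)-\nabla f_i(\mathbf{x})\|^2\le\beta^2$ for $\xi_i$ sampled from $D_i$. Then $$\mathbb{E}\Big[\frac1r\sum_{i\in\Omega_t}\|\hat{\bm{\theta}}^k-\bm{\theta}_i^k\|^2\Big]\le2s^2\eta^2\Big(\frac{d\sigma^2(r+1)}{r}+\frac{2\beta^2}{\gamma}\Big)+4s\eta^2\frac{2(n-r)^2+n^2}{n^3}\sum_{h=0}^{s-1}\sum_{i=1}^n\mathbb{E}\|\nabla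 f_i(\bm{\theta}_i^{t\tau+h})\|^2.$$
   Context: $f_i(\bm{\theta})=\frac1{|D_i|}\sum_{\xi\in D_i}l(\bm{\theta},\xi)$ is the local objective of device $i$; $\eta$ step size, $\tau$ local period, $\gamma$ mini-batch size, $d$ model dimension, $r$ number of selected devices. The quantity on the left is the (network) divergence between the selected devices' local models and their average at local step $s$ of round $t$. *)

theory Defs
  imports "HOL-Probability.Probability"
begin

definition local_obj :: "(nat \<Rightarrow> 'x set) \<Rightarrow> ('v \<Rightarrow> 'x \<Rightarrow> real) \<Rightarrow> nat \<Rightarrow> 'v \<Rightarrow> real" where
  "local_obj D l i \<theta> = (1 / real (card (D i))) * (\<Sum>\<xi>\<in>D i. l \<theta> \<xi>)"

text \<open>Local noisy mini-batch SGD trajectory of device i within the round, started at theta0.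
  traj ... i h \<omega> is the local model at global step t*tau + h.
  xi i h j \<omega> is the j-th mini-batch sample (j < gamma) at local step h, b i h \<omega> the Gaussian noise.\<close>
fun traj :: "real \<Rightarrow> nat \<Rightarrow> ('v::real_vector \<Rightarrow> 'x \<Rightarrow> 'v) \<Rightarrow> 'v
             \<Rightarrow> (nat \<Rightarrow> nat \<Rightarrow> nat \<Rightarrow> 'a \<Rightarrow> 'x) \<Rightarrow> (nat \<Rightarrow> nat \<Rightarrow> 'a \<Rightarrow> 'v)
             \<Rightarrow> nat \<Rightarrow> nat \<Rightarrow> 'a \<Rightarrow> 'v" where
  "traj \<eta> \<gamma> gl \<theta>0 \<xi> b i 0 \<omega> = \<theta>0"
| "traj \<eta> \<gamma> gl \<theta>0 \<xi> b i (Suc h) \<omega> =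
     traj \<eta> \<gamma> gl \<theta>0 \<xi> b i h \<omega>
     - \<eta> *\<^sub>R ((1 / real \<gamma>) *\<^sub>R (\<Sum>j<\<gamma>. gl (traj \<eta> \<gamma> gl \<theta>0 \<xi> b i h \<omega>) (\<xi> i h j \<omega>))
                + b i h \<omega>)"

definition gauss_density :: "real \<Rightarrow> real^'d \<Rightarrow> ennreal" where
  "gauss_density \<sigma> x = ennreal (\<Prod>j\<in>UNIV. normal_density 0 \<sigma> (x $ j))"

end

theory Submission
  imports Defs
begin

text \<open>Unrolling the recursion gives \<open>\<theta>\<^sub>i\<^sup>s = \<theta>\<^sup>t - \<eta> (X\<^sub>i + Y\<^sub>i + Z\<^sub>i)\<close>, where \<open>X\<^sub>i\<close>, \<open>Y\<^sub>i\<close>, \<open>Z\<^sub>i\<close> are the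
  sums over the first \<open>s\<close> local steps of the true gradients, the mini-batch errors and the Gaussian
  perturbations. The mean minimises the mean square deviation, so the divergence is at most
  \<open>\<eta>\<^sup>2/r\<close> times the sum of \<open>|X\<^sub>i + Y\<^sub>i + Z\<^sub>i|\<^sup>2\<close> over the selected devices; the inequality
  \<open>|p + q + w|\<^sup>2 \<le> 4|p|\<^sup>2 + 4|q|\<^sup>2 + 2|w|\<^sup>2\<close> and Cauchy-Schwarz over the \<open>s\<close> steps reduce this to
  second moments of single steps. An average of \<open>\<gamma>\<close> independent centred samples has second moment
  at most \<open>\<beta>\<^sup>2/\<gamma>\<close>, a perturbation has second moment \<open>d \<sigma>\<^sup>2\<close>, and since \<open>\<Omega>\<^sub>t\<close> is independent of the
  trajectories, each device is selected with probability \<open>r/n\<close>.\<close>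

section \<open>Deterministic estimates\<close>

lemma norm_add3_sq_le:
  fixes p q w :: "'v::real_inner"
  shows "(norm (p + q + w))\<^sup>2 \<le> 4 * (norm p)\<^sup>2 + 4 * (norm q)\<^sup>2 + 2 * (norm w)\<^sup>2"
proof -
  have "(norm (p + q + w))\<^sup>2 + (norm (w - p - q))\<^sup>2 + 2 * (norm (p - q))\<^sup>2
        = 4 * (norm p)\<^sup>2 + 4 * (norm q)\<^sup>2 + 2 * (norm w)\<^sup>2"
    by (simp add: power2_norm_eq_inner inner_add_left inner_add_right inner_diff_left
        inner_diff_right inner_commute algebra_simps)
  moreover have "0 \<le> (norm (w - p - q))\<^sup>2 + 2 * (norm (p - q))\<^sup>2" by simp
  ultimately show ?thesis by linarith
qed

lemma norm_sum_sq_le: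
  fixes v :: "'i \<Rightarrow> 'v::real_normed_vector"
  shows "(norm (\<Sum>h\<in>A. v h))\<^sup>2 \<le> real (card A) * (\<Sum>h\<in>A. (norm (v h))\<^sup>2)"
proof -
  have "(norm (\<Sum>h\<in>A. v h))\<^sup>2 \<le> (\<Sum>h\<in>A. 1 * norm (v h))\<^sup>2"
    using norm_sum[of v A] by (simp add: power_mono)
  also have "\<dots> \<le> (\<Sum>h\<in>A. 1\<^sup>2) * (\<Sum>h\<in>A. (norm (v h))\<^sup>2)"
    by (rule Cauchy_Schwarz_ineq_sum)
  finally show ?thesis by simp
qed

lemma sum_norm_sq_deviation_le:
  fixes X :: "'i \<Rightarrow> 'v::real_inner"
  shows "(\<Sum>i\<in>S. (norm ((1 / real (card S)) *\<^sub>R (\<Sum>j\<in>S. X j) - X i))\<^sup>2) \<le> (\<Sum>i\<in>S. (norm (X i))\<^sup>2)"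
proof (cases "card S = 0")
  case True
  then show ?thesis by (simp add: sum_nonneg)
next
  case False
  define m where "m = (1 / real (card S)) *\<^sub>R (\<Sum>j\<in>S. X j)"
  have sum_X: "(\<Sum>i\<in>S. X i) = real (card S) *\<^sub>R m" using False by (simp add: m_def)
  have "(\<Sum>i\<in>S. (norm (m - X i))\<^sup>2) = (\<Sum>i\<in>S. (norm m)\<^sup>2 - 2 * (m \<bullet> X i) + (norm (X i))\<^sup>2)"
    by (intro sum.cong refl) (simp add: power2_norm_eq_inner inner_diff_left inner_diff_right inner_commute)
  also have "\<dots> = real (card S) * (norm m)\<^sup>2 - 2 * (m \<bullet> (\<Sum>i\<in>S. X i)) + (\<Sum>i\<in>S. (norm (X i))\<^sup>2)"
    by (simp add: sum.distrib sum_subtractf inner_sum_right sum_distrib_left)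
  also have "\<dots> = (\<Sum>i\<in>S. (norm (X i))\<^sup>2) - real (card S) * (norm m)\<^sup>2"
    by (simp add: sum_X power2_norm_eq_inner)
  finally show ?thesis unfolding m_def[symmetric] by simp
qed

lemma sum_norm_sq_deviation_affine_le:
  fixes th W :: "'i \<Rightarrow> 'v::real_inner"
  assumes th: "\<And>i. i \<in> S \<Longrightarrow> th i = c - \<eta> *\<^sub>R W i"
  shows "(\<Sum>i\<in>S. (norm ((1 / real (card S)) *\<^sub>R (\<Sum>j\<in>S. th j) - th i))\<^sup>2)
     \<le> \<eta>\<^sup>2 * (\<Sum>i\<in>S. (norm (W i))\<^sup>2)"
proof (cases "card S = 0")
  case True
  then show ?thesis by (cases "finite S") auto
next
  case False
  define mW where "mW = (1 / real (card S)) *\<^sub>R (\<Sum>j\<in>S. W j)"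
  have dev: "(1 / real (card S)) *\<^sub>R (\<Sum>j\<in>S. th j) - th i = \<eta> *\<^sub>R (W i - mW)" if "i \<in> S" for i
  proof -
    have "(\<Sum>j\<in>S. th j) = (\<Sum>j\<in>S. c - \<eta> *\<^sub>R W j)"
      using th by (intro sum.cong) auto
    also have "\<dots> = real (card S) *\<^sub>R c - \<eta> *\<^sub>R (\<Sum>j\<in>S. W j)"
      by (simp add: sum_subtractf scaleR_sum_right sum_constant_scaleR)
    finally have "(1 / real (card S)) *\<^sub>R (\<Sum>j\<in>S. th j) = c - \<eta> *\<^sub>R mW"
      using False by (simp add: mW_def scaleR_diff_right)
    then show ?thesis
      using th[OF that] by (simp add: algebra_simps)
  qed
  have "(\<Sum>i\<in>S. (norm ((1 / real (card S)) *\<^sub>R (\<Sum>j\<in>S. th j) - th i))\<^sup>2)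
      = \<eta>\<^sup>2 * (\<Sum>i\<in>S. (norm (mW - W i))\<^sup>2)"
    by (simp add: dev sum_distrib_left power_mult_distrib norm_minus_commute)
  also have "\<dots> \<le> \<eta>\<^sup>2 * (\<Sum>i\<in>S. (norm (W i))\<^sup>2)"
    unfolding mW_def by (intro mult_left_mono sum_norm_sq_deviation_le) auto
  finally show ?thesis .
qed

lemma traj_cong:
  assumes "\<And>h' j. h' < h \<Longrightarrow> j < \<gamma> \<Longrightarrow> \<xi> i h' j \<omega> = \<xi>' i h' j \<omega>'"
    and "\<And>h'. h' < h \<Longrightarrow> b i h' \<omega> = b' i h' \<omega>'"
  shows "traj \<eta> \<gamma> gl \<theta>0 \<xi> b i h \<omega> = traj \<eta> \<gamma> gl \<theta>0 \<xi>' b' i h \<omega>'"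
  using assms by (induction h) auto

lemma traj_eq_sum:
  "traj \<eta> \<gamma> gl \<theta>0 \<xi> b i s \<omega> = \<theta>0 - \<eta> *\<^sub>R (\<Sum>h<s. (1 / real \<gamma>) *\<^sub>R
     (\<Sum>j<\<gamma>. gl (traj \<eta> \<gamma> gl \<theta>0 \<xi> b i h \<omega>) (\<xi> i h j \<omega>)) + b i h \<omega>)"
  by (induction s) (auto simp: algebra_simps scaleR_add_right)

section \<open>Measure-theoretic tools\<close>

lemma gradient_borel_measurable:
  fixes f :: "'v::euclidean_space \<Rightarrow> real" and g :: "'v \<Rightarrow> 'v"
  assumes der: "\<And>\<theta>. (f has_derivative (\<lambda>v. g \<theta> \<bullet> v)) (at \<theta>)"
  shows "g \<in> borel_measurable borel"
proof -
  have "continuous_on UNIV f"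
    by (intro continuous_at_imp_continuous_on ballI has_derivative_continuous[OF der])
  hence fm: "f \<in> borel_measurable borel" by (rule borel_measurable_continuous_onI)
  show ?thesis
  proof (rule borel_measurable_euclidean_space[THEN iffD2], rule ballI)
    fix e :: 'v assume "e \<in> Basis"
    define u where "u m \<theta> = (f (\<theta> + (1 / Suc m) *\<^sub>R e) - f \<theta>) / (1 / Suc m)" for m \<theta>
    show "(\<lambda>\<theta>. g \<theta> \<bullet> e) \<in> borel_measurable borel"
    proof (rule borel_measurable_LIMSEQ_real[where u=u])
      fix m
      have "(\<lambda>\<theta>. \<theta> + (1 / Suc m) *\<^sub>R e) \<in> borel_measurable borel"
        by (intro borel_measurable_continuous_onI continuous_intros)
      hence "(\<lambda>\<theta>. f (\<theta> + (1 / Suc m) *\<^sub>R e)) \<in> borel_measurable borel"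
        using fm by (rule measurable_compose)
      thus "u m \<in> borel_measurable borel" unfolding u_def using fm by measurable
    next
      fix \<theta> :: 'v
      define \<phi> where "\<phi> t = f (\<theta> + t *\<^sub>R e)" for t :: real
      have "((\<lambda>t. \<theta> + t *\<^sub>R e) has_derivative (\<lambda>t. t *\<^sub>R e)) (at 0)"
        by (auto intro!: derivative_eq_intros)
      moreover have "(f has_derivative (\<lambda>v. g \<theta> \<bullet> v)) (at (\<theta> + 0 *\<^sub>R e))"
        using der by simp
      ultimately have "(\<phi> has_derivative (\<lambda>t. g \<theta> \<bullet> (t *\<^sub>R e))) (at 0)"
        unfolding \<phi>_def by (rule has_derivative_compose)
      moreover have "(\<lambda>t. g \<theta> \<bullet> (t *\<^sub>R e)) = (*) (g \<theta> \<bullet> e)"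
        by (auto simp: fun_eq_iff)
      ultimately have "(\<phi> has_field_derivative (g \<theta> \<bullet> e)) (at 0)"
        by (simp add: has_field_derivative_def mult.commute)
      hence lim: "((\<lambda>y. (\<phi> y - \<phi> 0) / (y - 0)) \<longlongrightarrow> g \<theta> \<bullet> e) (at 0)"
        by (simp add: has_field_derivative_iff)
      have "filterlim (\<lambda>m::nat. 1 / real (Suc m)) (at 0) sequentially"
        unfolding filterlim_at
        by (auto intro!: LIMSEQ_Suc[OF lim_const_over_n[of 1]] simp del: of_nat_Suc)
      from filterlim_compose[OF lim this]
      show "(\<lambda>m. u m \<theta>) \<longlonglongrightarrow> g \<theta> \<bullet> e"
        unfolding u_def \<phi>_def by simp
    qed
  qed
qed

text \<open>\<open>distr\<close> does not require measurability, but a map whose image measure has total mass 1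
  cannot have a non-measurable preimage: that preimage and the preimage of its complement would both
  be assigned measure 0.\<close>

lemma measurable_if_distr_prob_space:
  assumes eq: "distr M N f = Q" and Q: "prob_space Q"
    and into: "\<And>x. x \<in> space M \<Longrightarrow> f x \<in> space N"
  shows "f \<in> measurable M N"
proof -
  define \<mu> where "\<mu> A = emeasure M (f -` A \<inter> space M)" for A
  have sQ: "sets Q = sets N" "space Q = space N"
    using eq[symmetric] by (auto simp: sets_distr space_distr)
  have space_1: "emeasure (distr M N f) (space N) = 1"
    using eq Q sQ prob_space.emeasure_space_1[OF Q] by simp
  have ms: "measure_space (space N) (sets N) \<mu>"
  proof (rule ccontr)
    assume "\<not> ?thesis"
    hence "emeasure (distr M N f) (space N) = 0"
      unfolding distr_def \<mu>_def
      by (simp add: emeasure_measure_of_conv sets.sigma_sets_eq)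
    with space_1 show False by simp
  qed
  have em: "emeasure Q A = \<mu> A" if "A \<in> sets N" for A
    using that ms unfolding eq[symmetric] distr_def \<mu>_def
    by (simp add: emeasure_measure_of_conv sets.sigma_sets_eq)
  show ?thesis
  proof (rule measurableI)
    show "f x \<in> space N" if "x \<in> space M" for x using into that .
    fix A assume A: "A \<in> sets N"
    show "f -` A \<inter> space M \<in> sets M"
    proof (rule ccontr)
      assume nA: "f -` A \<inter> space M \<notin> sets M"
      hence "\<mu> A = 0" unfolding \<mu>_def by (rule emeasure_notin_sets)
      have Ac: "space N - A \<in> sets N" using A by auto
      have "emeasure Q A + emeasure Q (space N - A) = emeasure Q (A \<union> (space N - A))"
        using A Ac sQ by (intro plus_emeasure) auto
      also have "A \<union> (space N - A) = space Q" using sets.sets_into_space[OF A] sQ by auto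
      finally have "\<mu> (space N - A) = 1"
        using em[OF A] em[OF Ac] \<open>\<mu> A = 0\<close> prob_space.emeasure_space_1[OF Q] by simp
      hence "f -` (space N - A) \<inter> space M \<in> sets M"
        unfolding \<mu>_def using emeasure_notin_sets by force
      moreover have "f -` A \<inter> space M = space M - (f -` (space N - A) \<inter> space M)"
        using into by auto
      ultimately show False using nA by auto
    qed
  qed
qed

lemma measurable_PiM_pmf_component:
  "i \<in> I \<Longrightarrow> (\<lambda>x. u (x i)) \<in> borel_measurable (PiM I (\<lambda>_. measure_pmf p))"
  by (rule measurable_compose[where f="\<lambda>x. x i" and N="measure_pmf p"])
     (auto intro: measurable_component_singleton)

lemma nn_integral_norm_sum_iid_le:
  fixes u :: "'x \<Rightarrow> 'v::euclidean_space" and K :: "'k set"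
  assumes D: "finite D" "D \<noteq> {}"
    and mean_0: "(\<Sum>z\<in>D. u z) = 0"
    and second_moment: "(\<Sum>z\<in>D. (norm (u z))\<^sup>2) \<le> real (card D) * B"
    and K: "finite K"
  shows "(\<integral>\<^sup>+y. ennreal ((norm (\<Sum>k\<in>K. u (y k)))\<^sup>2) \<partial>PiM K (\<lambda>_. measure_pmf (pmf_of_set D)))
         \<le> ennreal (real (card K) * B)"
  using K
proof (induction K rule: finite_induct)
  case empty thus ?case by simp
next
  case (insert k K)
  let ?Q = "measure_pmf (pmf_of_set D)"
  interpret product_prob_space "\<lambda>_::'k. ?Q" K
    by unfold_locales (simp add: prob_space_measure_pmf)
  have card_D: "0 < card D" using D by (simp add: card_gt_0_iff)
  have B: "0 \<le> B"
  proof -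
    have "0 \<le> (\<Sum>z\<in>D. (norm (u z))\<^sup>2)" by (intro sum_nonneg) auto
    with second_moment have "0 \<le> real (card D) * B" by linarith
    with card_D show ?thesis by (simp add: zero_le_mult_iff)
  qed
  have [measurable]: "u \<in> measurable ?Q borel" by simp
  have [measurable]: "(\<lambda>x. \<Sum>k'\<in>K'. u (x k')) \<in> borel_measurable (PiM K'' (\<lambda>_. ?Q))"
    if "K' \<subseteq> K''" for K' K''
    using that by (intro borel_measurable_sum measurable_PiM_pmf_component) auto
  have "(\<integral>\<^sup>+y. ennreal ((norm (\<Sum>k'\<in>insert k K. u (y k')))\<^sup>2) \<partial>PiM (insert k K) (\<lambda>_. ?Q))
      = (\<integral>\<^sup>+x. (\<integral>\<^sup>+y. ennreal ((norm (\<Sum>k'\<in>insert k K. u ((x(k := y)) k')))\<^sup>2) \<partial>?Q) \<partial>PiM K (\<lambda>_. ?Q))"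
    by (rule product_nn_integral_insert[OF insert(1,2)]) measurable
  also have "\<dots> \<le> (\<integral>\<^sup>+x. ennreal ((norm (\<Sum>k'\<in>K. u (x k')))\<^sup>2) + ennreal B \<partial>PiM K (\<lambda>_. ?Q))"
  proof (rule nn_integral_mono)
    fix x
    define S where "S = (\<Sum>k'\<in>K. u (x k'))"
    have eq: "(\<Sum>k'\<in>insert k K. u ((x(k := y)) k')) = u y + S" for y
      using insert unfolding S_def by (auto intro!: sum.cong)
    have "(\<Sum>z\<in>D. (norm (u z + S))\<^sup>2) = (\<Sum>z\<in>D. (norm (u z))\<^sup>2 + 2 * (S \<bullet> u z) + (norm S)\<^sup>2)"
      by (intro sum.cong refl) (simp add: power2_norm_eq_inner inner_add_left inner_add_right inner_commute)
    also have "\<dots> = (\<Sum>z\<in>D. (norm (u z))\<^sup>2) + 2 * (S \<bullet> (\<Sum>z\<in>D. u z)) + real (card D) * (norm S)\<^sup>2"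
      by (simp add: sum.distrib inner_sum_right sum_distrib_left)
    also have "\<dots> \<le> real (card D) * ((norm S)\<^sup>2 + B)"
      using second_moment mean_0 by (simp add: algebra_simps)
    finally have "(\<Sum>z\<in>D. (norm (u z + S))\<^sup>2) / card D \<le> (norm S)\<^sup>2 + B"
      using card_D by (simp add: divide_le_eq mult.commute)
    then have "(\<Sum>z\<in>D. ennreal ((norm (u z + S))\<^sup>2)) / card D \<le> ennreal ((norm S)\<^sup>2) + ennreal B"
      using card_D B
      by (simp add: sum_ennreal ennreal_of_nat_eq_real_of_nat divide_ennreal sum_nonneg
          flip: ennreal_plus)
    then show "(\<integral>\<^sup>+y. ennreal ((norm (\<Sum>k'\<in>insert k K. u ((x(k := y)) k')))\<^sup>2) \<partial>?Q)
        \<le> ennreal ((norm (\<Sum>k'\<in>K. u (x k')))\<^sup>2) + ennreal B"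
      unfolding eq nn_integral_pmf_of_set[OF D(2,1)] S_def .
  qed
  also have "\<dots> = (\<integral>\<^sup>+x. ennreal ((norm (\<Sum>k'\<in>K. u (x k')))\<^sup>2) \<partial>PiM K (\<lambda>_. ?Q)) + ennreal B"
    by (subst nn_integral_add) (auto simp: emeasure_space_1)
  also have "\<dots> \<le> ennreal (real (card K) * B) + ennreal B"
    using insert.IH by (rule add_right_mono)
  also have "\<dots> = ennreal (real (card (insert k K)) * B)"
    using insert B by (simp add: algebra_simps flip: ennreal_plus)
  finally show ?case .
qed

lemma (in product_prob_space) nn_integral_PiM_le_sections:
  assumes "finite I" "J \<subseteq> I" and f: "f \<in> borel_measurable (PiM I M)"
    and sections: "\<And>x. (\<integral>\<^sup>+z. f (merge (I - J) J (x, z)) \<partial>PiM J M) \<le> c"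
  shows "(\<integral>\<^sup>+x. f x \<partial>PiM I M) \<le> c"
proof -
  have I: "(I - J) \<inter> J = {}" "finite (I - J)" "finite J" "(I - J) \<union> J = I"
    using assms(1,2) by (auto intro: finite_subset)
  interpret IJ: prob_space "PiM (I - J) M" by (rule prob_space_PiM) (rule prob_space)
  have "(\<integral>\<^sup>+x. f x \<partial>PiM I M) = (\<integral>\<^sup>+x. (\<integral>\<^sup>+z. f (merge (I - J) J (x, z)) \<partial>PiM J M) \<partial>PiM (I - J) M)"
    using product_nn_integral_fold[OF I(1-3), of f] f unfolding I(4) by simp
  also have "\<dots> \<le> (\<integral>\<^sup>+x. c \<partial>PiM (I - J) M)"
    by (intro nn_integral_mono sections)
  finally show ?thesis by (simp add: IJ.emeasure_space_1)
qed

lemma nn_integral_indicator_independent_component: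
  assumes A: "prob_space A" and B: "prob_space B" and C: "prob_space C"
    and K: "K \<in> borel_measurable (A \<Otimes>\<^sub>M (B \<Otimes>\<^sub>M C))"
    and K_indep: "\<And>a b c c'. K (a, b, c) = K (a, b, c')"
    and E: "E \<in> sets C"
  shows "(\<integral>\<^sup>+w. indicator E (snd (snd w)) * K w \<partial>(A \<Otimes>\<^sub>M (B \<Otimes>\<^sub>M C)))
       = emeasure C E * (\<integral>\<^sup>+w. K w \<partial>(A \<Otimes>\<^sub>M (B \<Otimes>\<^sub>M C)))"
proof -
  let ?Q = "B \<Otimes>\<^sub>M C"
  interpret pa: prob_space A by (rule A)
  interpret pb: prob_space B by (rule B)
  interpret pc: prob_space C by (rule C)
  interpret BC: pair_prob_space B C ..
  interpret q: prob_space ?Q by (rule BC.prob_space_axioms)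
  interpret AQ: pair_prob_space A ?Q ..
  define H where "H y = (\<integral>\<^sup>+x. K (x, y) \<partial>A)" for y
  define G where "G b = (\<integral>\<^sup>+c. H (b, c) \<partial>C)" for b
  have H: "H \<in> borel_measurable ?Q"
    unfolding H_def using measurable_pair_swap[OF K] by (rule pa.borel_measurable_nn_integral)
  have G: "G \<in> borel_measurable B"
    unfolding G_def using H by (rule pc.borel_measurable_nn_integral_fst)
  have H_G: "H (b, c) = G b" for b c
  proof -
    have "G b = (\<integral>\<^sup>+c'. H (b, c) \<partial>C)"
      unfolding G_def H_def by (intro nn_integral_cong) (rule K_indep)
    then show ?thesis by (simp add: pc.emeasure_space_1)
  qed
  have ind: "(\<lambda>w. indicator E (snd (snd w)) :: ennreal) \<in> borel_measurable (A \<Otimes>\<^sub>M ?Q)"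
    using E by measurable
  have "(\<integral>\<^sup>+w. indicator E (snd (snd w)) * K w \<partial>(A \<Otimes>\<^sub>M ?Q))
      = (\<integral>\<^sup>+y. (\<integral>\<^sup>+x. indicator E (snd y) * K (x, y) \<partial>A) \<partial>?Q)"
    using AQ.nn_integral_snd[OF borel_measurable_times_ennreal[OF ind K]] by simp
  also have "\<dots> = (\<integral>\<^sup>+y. indicator E (snd y) * H y \<partial>?Q)"
    unfolding H_def
    by (intro nn_integral_cong nn_integral_cmult measurable_compose[OF measurable_Pair2' K]) auto
  also have "\<dots> = (\<integral>\<^sup>+b. (\<integral>\<^sup>+c. G b * indicator E c \<partial>C) \<partial>B)"
    using pc.nn_integral_fst[of "\<lambda>y. indicator E (snd y) * H y" B] H E
    by (simp add: H_G mult.commute)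
  also have "\<dots> = (\<integral>\<^sup>+b. G b * emeasure C E \<partial>B)"
    using E by (intro nn_integral_cong nn_integral_cmult_indicator)
  also have "\<dots> = (\<integral>\<^sup>+b. G b \<partial>B) * emeasure C E"
    by (rule nn_integral_multc[OF G])
  also have "(\<integral>\<^sup>+b. G b \<partial>B) = (\<integral>\<^sup>+y. H y \<partial>?Q)"
    unfolding G_def by (rule pc.nn_integral_fst[OF H])
  also have "\<dots> = (\<integral>\<^sup>+w. K w \<partial>(A \<Otimes>\<^sub>M ?Q))"
    unfolding H_def by (rule AQ.nn_integral_snd[OF K])
  finally show ?thesis by (simp add: mult.commute)
qed

section \<open>Gaussian and uniform-subset moments\<close>

lemma nn_integral_normal_density:
  "0 < \<sigma> \<Longrightarrow> (\<integral>\<^sup>+t. ennreal (normal_density 0 \<sigma> t) \<partial>lborel) = 1"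
  by (subst nn_integral_eq_integral) auto

lemma nn_integral_normal_density_sq:
  assumes "0 < \<sigma>"
  shows "(\<integral>\<^sup>+t. ennreal (normal_density 0 \<sigma> t * t\<^sup>2) \<partial>lborel) = ennreal (\<sigma>\<^sup>2)"
proof -
  have "has_bochner_integral lborel (\<lambda>x. normal_density 0 \<sigma> x * (x - 0) ^ (2 * 1))
          (fact (2 * 1) / ((2 / \<sigma>\<^sup>2) ^ 1 * fact 1))"
    using normal_moment_even[OF assms, of 0 1] .
  then have "has_bochner_integral lborel (\<lambda>x. normal_density 0 \<sigma> x * x\<^sup>2) (\<sigma>\<^sup>2)"
    using assms by (simp add: power2_eq_square fact_numeral)
  then show ?thesis
    by (subst nn_integral_eq_integral) (auto simp: has_bochner_integral_iff)
qed

lemma nn_integral_gauss_density_norm_sq: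
  assumes "0 < \<sigma>"
  shows "(\<integral>\<^sup>+x. gauss_density \<sigma> (x :: real^'d) * ennreal ((norm x)\<^sup>2) \<partial>lborel)
       = ennreal (real CARD('d) * \<sigma>\<^sup>2)"
proof -
  let ?e = "\<lambda>j::'d. axis j (1::real)"
  have Basis: "(Basis :: (real^'d) set) = range ?e" by (auto simp: Basis_vec_def)
  have inj_e: "inj ?e" by (auto simp: inj_def axis_eq_axis)
  \<comment> \<open>The integrand splits into \<open>CARD('d)\<close> products over the coordinates, in each of which only
    coordinate \<open>k\<close> carries the extra factor \<open>t\<^sup>2\<close>.\<close>
  define f where "f k b t = ennreal (normal_density 0 \<sigma> t * (if b = ?e k then t\<^sup>2 else 1))"
    for k and b :: "real^'d" and t
  have product_form: "gauss_density \<sigma> x * ennreal ((norm x)\<^sup>2) = (\<Sum>k\<in>UNIV. \<Prod>b\<in>Basis. f k b (x \<bullet> b))"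
    for x :: "real^'d"
  proof -
    have "(\<Prod>b\<in>Basis. f k b (x \<bullet> b)) = (\<Prod>j\<in>UNIV. f k (?e j) (x $ j))" for k
      unfolding Basis by (subst prod.reindex[OF inj_e]) (simp add: inner_axis)
    also have "\<dots> k = ennreal ((\<Prod>j\<in>UNIV. normal_density 0 \<sigma> (x $ j)) * (x $ k)\<^sup>2)" for k
      unfolding f_def
      by (subst prod_ennreal) (auto simp: axis_eq_axis prod.distrib prod.delta intro!: prod.cong)
    finally have "(\<Sum>k\<in>UNIV. \<Prod>b\<in>Basis. f k b (x \<bullet> b))
        = ennreal (\<Sum>k\<in>UNIV. (\<Prod>j\<in>UNIV. normal_density 0 \<sigma> (x $ j)) * (x $ k)\<^sup>2)"
      by (simp add: sum_ennreal prod_nonneg)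
    also have "\<dots> = gauss_density \<sigma> x * ennreal ((norm x)\<^sup>2)"
      unfolding gauss_density_def power2_norm_eq_inner inner_vec_def sum_distrib_left[symmetric]
      by (simp add: prod_nonneg power2_eq_square sum_nonneg flip: ennreal_mult)
    finally show ?thesis ..
  qed
  have f: "f k b \<in> borel_measurable borel" for k b unfolding f_def by measurable
  have "(\<integral>\<^sup>+x. gauss_density \<sigma> (x :: real^'d) * ennreal ((norm x)\<^sup>2) \<partial>lborel)
      = (\<Sum>k\<in>UNIV. \<integral>\<^sup>+x. (\<Prod>b\<in>Basis. f k b (x \<bullet> b)) \<partial>lborel)"
    unfolding product_form by (rule nn_integral_sum) (use f in measurable)
  also have "\<dots> = (\<Sum>k\<in>UNIV. \<Prod>b\<in>Basis. (\<integral>\<^sup>+t. f k b t \<partial>lborel))"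
    by (intro sum.cong refl nn_integral_lborel_prod f) auto
  also have "\<dots> = (\<Sum>k\<in>(UNIV::'d set). \<Prod>b\<in>Basis. (if b = ?e k then ennreal (\<sigma>\<^sup>2) else 1))"
    using assms
    by (intro sum.cong prod.cong refl)
      (auto simp: f_def nn_integral_normal_density nn_integral_normal_density_sq)
  also have "\<dots> = ennreal (real CARD('d) * \<sigma>\<^sup>2)"
    by (simp add: prod.delta Basis ennreal_of_nat_eq_real_of_nat ennreal_mult)
  finally show ?thesis .
qed

lemma finite_subsets_card:
  fixes n :: nat
  shows "finite {S. S \<subseteq> {..<n} \<and> card S = r}"
  by (rule finite_subset[of _ "Pow {..<n}"]) auto

lemma card_subsets_card_containing:
  fixes i n :: nat
  assumes "i < n" "0 < r"
  shows "card {S. S \<subseteq> {..<n} \<and> card S = r \<and> i \<in> S} = (n - 1) choose (r - 1)"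
proof -
  let ?U = "{U. U \<subseteq> {..<n} - {i} \<and> card U = r - 1}"
  have "{S. S \<subseteq> {..<n} \<and> card S = r \<and> i \<in> S} = insert i ` ?U"
  proof (intro equalityI subsetI)
    fix S assume S: "S \<in> {S. S \<subseteq> {..<n} \<and> card S = r \<and> i \<in> S}"
    then have "finite S" by (auto intro: finite_subset)
    with S show "S \<in> insert i ` ?U"
      by (intro rev_image_eqI[of "S - {i}"]) auto
  next
    fix S assume "S \<in> insert i ` ?U"
    then obtain U where U: "U \<subseteq> {..<n} - {i}" "card U = r - 1" and S: "S = insert i U" by auto
    have "finite U" "i \<notin> U" using U by (auto intro: finite_subset)
    with U S assms show "S \<in> {S. S \<subseteq> {..<n} \<and> card S = r \<and> i \<in> S}" by auto
  qed
  moreover have "inj_on (insert i) ?U"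
  proof (rule inj_onI)
    fix U V assume "U \<in> ?U" "V \<in> ?U" "insert i U = insert i V"
    then show "U = V" by (metis Diff_insert_absorb Diff_iff insertI1 mem_Collect_eq subsetD)
  qed
  ultimately have "card {S. S \<subseteq> {..<n} \<and> card S = r \<and> i \<in> S} = card ?U"
    by (simp add: card_image)
  also have "\<dots> = (n - 1) choose (r - 1)"
    using assms by (subst n_subsets) auto
  finally show ?thesis .
qed

lemma emeasure_uniform_subset_contains:
  fixes i n :: nat
  assumes i: "i < n" and r: "0 < r" "r \<le> n"
  shows "emeasure (measure_pmf (pmf_of_set {S. S \<subseteq> {..<n} \<and> card S = r})) {S. i \<in> S}
       = ennreal (real r / real n)"
proof -
  let ?Subs = "{S. S \<subseteq> {..<n} \<and> card S = r}"
  have card_Subs: "card ?Subs = n choose r" by (simp add: n_subsets)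
  have "{..<r} \<in> ?Subs" using r by auto
  then have ne: "?Subs \<noteq> {}" by blast
  have "?Subs \<inter> {S. i \<in> S} = {S. S \<subseteq> {..<n} \<and> card S = r \<and> i \<in> S}" by auto
  then have "emeasure (measure_pmf (pmf_of_set ?Subs)) {S. i \<in> S}
      = ennreal (real ((n - 1) choose (r - 1)) / real (n choose r))"
    using ne finite_subsets_card[of n r] card_subsets_card_containing[OF i r(1)] card_Subs
    by (simp add: emeasure_pmf_of_set ennreal_of_nat_eq_real_of_nat divide_ennreal card_gt_0_iff)
  also have "real ((n - 1) choose (r - 1)) / real (n choose r) = real r / real n"
  proof -
    have "real r * real (n choose r) = real n * real ((n - 1) choose (r - 1))"
      using times_binomial_minus1_eq[OF r(1)] by (metis of_nat_mult)
    moreover have "0 < n choose r" using r by simp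
    ultimately show ?thesis using i by (simp add: field_simps)
  qed
  finally show ?thesis .
qed

section \<open>The canonical model of a round\<close>

type_synonym ('x, 'd) sample = "(nat \<times> nat \<times> nat \<Rightarrow> 'x) \<times> (nat \<times> nat \<Rightarrow> real^'d) \<times> nat set"

text \<open>A sample consists of the mini-batch samples, the Gaussian perturbations and the set of
  selected devices, and \<open>P\<close> is their joint law; the hypotheses on the given probability space say
  precisely that it is mapped onto this model.\<close>

locale sgd_model =
  fixes n \<tau> \<gamma> r :: nat and \<eta> \<beta> :: real and \<theta>0 :: "real^'d"
    and D :: "nat \<Rightarrow> 'x set" and gl :: "real^'d \<Rightarrow> 'x \<Rightarrow> real^'d"
    and gf :: "nat \<Rightarrow> real^'d \<Rightarrow> real^'d"
    and noise_law :: "(nat \<times> nat \<Rightarrow> real^'d) measure"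
  assumes D_fin: "\<And>i. i < n \<Longrightarrow> finite (D i) \<and> D i \<noteq> {}"
    and gl_measurable: "\<And>i z. i < n \<Longrightarrow> z \<in> D i \<Longrightarrow> (\<lambda>\<theta>. gl \<theta> z) \<in> borel_measurable borel"
    and unbiased: "\<And>i x. i < n \<Longrightarrow>
                   measure_pmf.expectation (pmf_of_set (D i)) (\<lambda>z. gl x z) = gf i x"
    and bounded_var: "\<And>i x. i < n \<Longrightarrow>
                   measure_pmf.expectation (pmf_of_set (D i)) (\<lambda>z. (norm (gl x z - gf i x))\<^sup>2) \<le> \<beta>\<^sup>2"
    and prob_space_noise_law: "prob_space noise_law"
    and sets_noise_law: "sets noise_law = sets (PiM {(i, h). i < n \<and> h < \<tau>} (\<lambda>_. borel))"
    and r_pos: "0 < r" and r_le: "r \<le> n"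
    and gamma_pos: "0 < \<gamma>"
begin

definition batch_idx :: "(nat \<times> nat \<times> nat) set" where
  "batch_idx = {(i, h, j). i < n \<and> h < \<tau> \<and> j < \<gamma>}"

definition noise_idx :: "(nat \<times> nat) set" where
  "noise_idx = {(i, h). i < n \<and> h < \<tau>}"

definition subsets :: "nat set set" where
  "subsets = {S. S \<subseteq> {..<n} \<and> card S = r}"

definition sample_space :: "('x, 'd) sample measure" where
  "sample_space = PiM batch_idx (\<lambda>_. count_space UNIV)
     \<Otimes>\<^sub>M (PiM noise_idx (\<lambda>_. borel) \<Otimes>\<^sub>M count_space UNIV)"

definition batch_law :: "(nat \<times> nat \<times> nat \<Rightarrow> 'x) measure" where
  "batch_law = PiM batch_idx (\<lambda>k. measure_pmf (pmf_of_set (D (fst k))))"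

definition selection_law :: "nat set measure" where
  "selection_law = measure_pmf (pmf_of_set subsets)"

definition P :: "('x, 'd) sample measure" where
  "P = batch_law \<Otimes>\<^sub>M (noise_law \<Otimes>\<^sub>M selection_law)"

text \<open>Samples outside \<open>D i\<close> form a null set. Mapping them into \<open>D i\<close> makes \<open>gl \<theta>\<close> of a sample a
  finite combination of indicators, hence jointly measurable in the sample and \<open>\<theta>\<close>.\<close>

definition into_data :: "nat \<Rightarrow> 'x \<Rightarrow> 'x" where
  "into_data i x = (if x \<in> D i then x else (SOME z. z \<in> D i))"

definition batch :: "nat \<Rightarrow> nat \<Rightarrow> nat \<Rightarrow> ('x, 'd) sample \<Rightarrow> 'x" where
  "batch i h j w = into_data i (fst w (i, h, j))"

definition noise :: "nat \<Rightarrow> nat \<Rightarrow> ('x, 'd) sample \<Rightarrow> real^'d" where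
  "noise i h w = fst (snd w) (i, h)"

definition model_traj :: "nat \<Rightarrow> nat \<Rightarrow> ('x, 'd) sample \<Rightarrow> real^'d" where
  "model_traj = traj \<eta> \<gamma> gl \<theta>0 batch noise"

definition grad_term :: "nat \<Rightarrow> nat \<Rightarrow> ('x, 'd) sample \<Rightarrow> real^'d" where
  "grad_term i h w = gf i (model_traj i h w)"

definition batch_error :: "nat \<Rightarrow> nat \<Rightarrow> ('x, 'd) sample \<Rightarrow> real^'d" where
  "batch_error i h w = (1 / real \<gamma>) *\<^sub>R (\<Sum>j<\<gamma>. gl (model_traj i h w) (batch i h j w)) - grad_term i h w"

definition step_moments :: "nat \<Rightarrow> nat \<Rightarrow> ('x, 'd) sample \<Rightarrow> real" where
  "step_moments i h w =
     4 * (norm (grad_term i h w))\<^sup>2 + 4 * (norm (batch_error i h w))\<^sup>2 + 2 * (norm (noise i h w))\<^sup>2"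

lemma into_data_in: "i < n \<Longrightarrow> into_data i x \<in> D i"
  using D_fin[of i] by (auto simp: into_data_def intro: someI_ex)

lemma into_data_id: "x \<in> D i \<Longrightarrow> into_data i x = x"
  by (simp add: into_data_def)

lemma measurable_batch: "(i, h, j) \<in> batch_idx \<Longrightarrow> batch i h j \<in> measurable sample_space (count_space UNIV)"
  unfolding batch_def sample_space_def
  by (rule measurable_compose[where f="\<lambda>w. fst w (i, h, j)"])
     (auto intro!: measurable_compose[OF measurable_fst] measurable_component_singleton)

lemma measurable_noise: "(i, h) \<in> noise_idx \<Longrightarrow> noise i h \<in> borel_measurable sample_space"
  unfolding noise_def sample_space_def
  by (rule measurable_compose[where f="\<lambda>w. fst (snd w)"])
     (auto intro!: measurable_compose[OF measurable_snd] measurable_fst measurable_component_singleton)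

lemma measurable_gl_batch:
  assumes k: "(i, h, j) \<in> batch_idx" and t: "t \<in> borel_measurable sample_space"
  shows "(\<lambda>w. gl (t w) (batch i h j w)) \<in> borel_measurable sample_space"
proof -
  have i: "i < n" using k by (auto simp: batch_idx_def)
  have "gl (t w) (batch i h j w) = (\<Sum>z\<in>D i. (if batch i h j w = z then 1 else 0) *\<^sub>R gl (t w) z)" for w
  proof -
    have "(\<Sum>z\<in>D i. (if batch i h j w = z then 1 else 0) *\<^sub>R gl (t w) z)
        = (\<Sum>z\<in>D i. if batch i h j w = z then gl (t w) z else 0)"
      by (intro sum.cong) auto
    also have "\<dots> = gl (t w) (batch i h j w)"
      using D_fin[OF i] into_data_in[OF i] by (simp add: sum.delta' batch_def)
    finally show ?thesis ..
  qed
  moreover have "(\<lambda>w. \<Sum>z\<in>D i. (if batch i h j w = z then 1 else 0) *\<^sub>R gl (t w) z) \<in> borel_measurable sample_space"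
  proof (intro borel_measurable_sum borel_measurable_scaleR)
    fix z assume z: "z \<in> D i"
    have [measurable]: "batch i h j \<in> measurable sample_space (count_space UNIV)"
      using k by (rule measurable_batch)
    show "(\<lambda>w. if batch i h j w = z then 1 else 0 :: real) \<in> borel_measurable sample_space"
      by measurable
    show "(\<lambda>w. gl (t w) z) \<in> borel_measurable sample_space"
      using t gl_measurable[OF i z] by (rule measurable_compose)
  qed
  ultimately show ?thesis by simp
qed

lemma measurable_model_traj: "i < n \<Longrightarrow> h \<le> \<tau> \<Longrightarrow> model_traj i h \<in> borel_measurable sample_space"
proof (induction h)
  case 0
  then show ?case by (simp add: model_traj_def)
next
  case (Suc h)
  then have IH: "model_traj i h \<in> borel_measurable sample_space" by simp
  have "model_traj i (Suc h) = (\<lambda>w. model_traj i h w - \<eta> *\<^sub>R ((1 / real \<gamma>) *\<^sub>R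
      (\<Sum>j<\<gamma>. gl (model_traj i h w) (batch i h j w)) + noise i h w))"
    by (simp add: model_traj_def fun_eq_iff)
  also have "\<dots> \<in> borel_measurable sample_space"
  proof (intro borel_measurable_diff borel_measurable_scaleR borel_measurable_add borel_measurable_sum
      borel_measurable_const IH)
    show "(\<lambda>w. gl (model_traj i h w) (batch i h j w)) \<in> borel_measurable sample_space"
      if "j \<in> {..<\<gamma>}" for j
      using Suc that by (intro measurable_gl_batch IH) (auto simp: batch_idx_def)
    show "noise i h \<in> borel_measurable sample_space"
      using Suc by (intro measurable_noise) (auto simp: noise_idx_def)
  qed
  finally show ?case .
qed

lemma gf_eq_average:
  assumes i: "i < n"
  shows "gf i t = (1 / real (card (D i))) *\<^sub>R (\<Sum>z\<in>D i. gl t z)"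
proof -
  have D: "finite (D i)" "D i \<noteq> {}" using D_fin[OF i] by auto
  have "gf i t = (\<Sum>z\<in>D i. pmf (pmf_of_set (D i)) z *\<^sub>R gl t z)"
    unfolding unbiased[OF i, symmetric] by (rule integral_measure_pmf[OF D(1)]) (use D in auto)
  also have "\<dots> = (\<Sum>z\<in>D i. (1 / real (card (D i))) *\<^sub>R gl t z)"
    using D by (intro sum.cong) auto
  finally show ?thesis by (simp add: scaleR_sum_right)
qed

lemma measurable_gf:
  assumes i: "i < n"
  shows "gf i \<in> borel_measurable borel"
proof -
  have "gf i = (\<lambda>t. (1 / real (card (D i))) *\<^sub>R (\<Sum>z\<in>D i. gl t z))"
    using gf_eq_average[OF i] by auto
  also have "\<dots> \<in> borel_measurable borel"
    using i by (intro borel_measurable_scaleR borel_measurable_const borel_measurable_sum gl_measurable)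
  finally show ?thesis .
qed

lemma measurable_grad_term: "i < n \<Longrightarrow> h < \<tau> \<Longrightarrow> grad_term i h \<in> borel_measurable sample_space"
  unfolding grad_term_def by (rule measurable_compose[OF measurable_model_traj measurable_gf]) auto

lemma measurable_batch_error:
  assumes "i < n" "h < \<tau>"
  shows "batch_error i h \<in> borel_measurable sample_space"
proof -
  have "(i, h, j) \<in> batch_idx" if "j < \<gamma>" for j using assms that by (auto simp: batch_idx_def)
  then show ?thesis
    using assms unfolding batch_error_def
    by (intro borel_measurable_diff borel_measurable_scaleR borel_measurable_const
        borel_measurable_sum measurable_grad_term measurable_gl_batch measurable_model_traj) auto
qed

lemma measurable_step_moments:
  assumes "i < n" "h < \<tau>"
  shows "step_moments i h \<in> borel_measurable sample_space"
proof -
  note [measurable] = measurable_grad_term[OF assms] measurable_batch_error[OF assms]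
    measurable_noise[of i h]
  show ?thesis using assms unfolding step_moments_def by (simp add: noise_idx_def)
qed

lemma sum_gl_minus_gf:
  assumes i: "i < n"
  shows "(\<Sum>z\<in>D i. gl t z - gf i t) = 0"
proof -
  have "0 < real (card (D i))" using D_fin[OF i] by (simp add: card_gt_0_iff)
  then have "real (card (D i)) *\<^sub>R gf i t = (\<Sum>z\<in>D i. gl t z)"
    by (simp add: gf_eq_average[OF i])
  then show ?thesis by (simp add: sum_subtractf sum_constant_scaleR del: sum_constant)
qed

lemma sum_norm_sq_gl_minus_gf_le:
  assumes i: "i < n"
  shows "(\<Sum>z\<in>D i. (norm (gl t z - gf i t))\<^sup>2) \<le> real (card (D i)) * \<beta>\<^sup>2"
proof -
  have D: "finite (D i)" "D i \<noteq> {}" using D_fin[OF i] by auto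
  then have "0 < real (card (D i))" by (simp add: card_gt_0_iff)
  with bounded_var[OF i, of t] show ?thesis
    by (simp add: integral_pmf_of_set[OF D(2,1)] divide_le_eq mult.commute)
qed

lemma nn_integral_minibatch_error_le:
  assumes i: "i < n" and J: "finite J" "card J = \<gamma>"
  shows "(\<integral>\<^sup>+z. ennreal ((norm ((1 / real \<gamma>) *\<^sub>R (\<Sum>k\<in>J. gl t (into_data i (z k))) - gf i t))\<^sup>2)
           \<partial>PiM J (\<lambda>_. measure_pmf (pmf_of_set (D i))))
         \<le> ennreal (\<beta>\<^sup>2 / real \<gamma>)"
proof -
  let ?Q = "PiM J (\<lambda>_. measure_pmf (pmf_of_set (D i)))"
  define u where "u x = gl t (into_data i x) - gf i t" for x
  have D: "finite (D i)" "D i \<noteq> {}" using D_fin[OF i] by auto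
  have eq: "(1 / real \<gamma>) *\<^sub>R (\<Sum>k\<in>J. gl t (into_data i (z k))) - gf i t
      = (1 / real \<gamma>) *\<^sub>R (\<Sum>k\<in>J. u (z k))" for z
  proof -
    have "(\<Sum>k\<in>J. u (z k)) = (\<Sum>k\<in>J. gl t (into_data i (z k))) - real \<gamma> *\<^sub>R gf i t"
      using J by (simp add: u_def sum_subtractf sum_constant_scaleR del: sum_constant)
    then show ?thesis using gamma_pos by (simp add: scaleR_diff_right)
  qed
  have sq: "(norm ((1 / real \<gamma>) *\<^sub>R v))\<^sup>2 = (1 / real \<gamma>)\<^sup>2 * (norm v)\<^sup>2" for v :: "real^'d"
    by (simp add: power_divide)
  have [measurable]: "(\<lambda>z. \<Sum>k\<in>J. u (z k)) \<in> borel_measurable ?Q"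
    by (intro borel_measurable_sum measurable_PiM_pmf_component) auto
  have "(\<integral>\<^sup>+z. ennreal ((norm ((1 / real \<gamma>) *\<^sub>R (\<Sum>k\<in>J. gl t (into_data i (z k))) - gf i t))\<^sup>2) \<partial>?Q)
      = (\<integral>\<^sup>+z. ennreal ((1 / real \<gamma>)\<^sup>2) * ennreal ((norm (\<Sum>k\<in>J. u (z k)))\<^sup>2) \<partial>?Q)"
    unfolding eq sq by (intro nn_integral_cong) (simp add: ennreal_mult)
  also have "\<dots> = ennreal ((1 / real \<gamma>)\<^sup>2) * (\<integral>\<^sup>+z. ennreal ((norm (\<Sum>k\<in>J. u (z k)))\<^sup>2) \<partial>?Q)"
    by (rule nn_integral_cmult) measurable
  also have "\<dots> \<le> ennreal ((1 / real \<gamma>)\<^sup>2) * ennreal (real (card J) * \<beta>\<^sup>2)"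
  proof (intro mult_left_mono nn_integral_norm_sum_iid_le D J(1))
    show "(\<Sum>z\<in>D i. u z) = 0" using sum_gl_minus_gf[OF i, of t] by (simp add: u_def into_data_id)
    show "(\<Sum>z\<in>D i. (norm (u z))\<^sup>2) \<le> real (card (D i)) * \<beta>\<^sup>2"
      using sum_norm_sq_gl_minus_gf_le[OF i, of t] by (simp add: u_def into_data_id)
  qed simp
  also have "\<dots> = ennreal (\<beta>\<^sup>2 / real \<gamma>)"
    using gamma_pos by (simp add: J(2) ennreal_mult[symmetric] power2_eq_square)
  finally show ?thesis .
qed

lemma finite_batch_idx: "finite batch_idx"
  unfolding batch_idx_def by (rule finite_subset[of _ "{..<n} \<times> {..<\<tau>} \<times> {..<\<gamma>}"]) auto

lemma prob_space_batch_law: "prob_space batch_law"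
  unfolding batch_law_def by (intro prob_space_PiM prob_space_measure_pmf)

lemma prob_space_selection_law: "prob_space selection_law"
  unfolding selection_law_def by (rule prob_space_measure_pmf)

lemma sets_P: "sets P = sets sample_space"
proof -
  have "sets batch_law = sets (PiM batch_idx (\<lambda>_. count_space UNIV))"
    unfolding batch_law_def by (intro sets_PiM_cong) auto
  then show ?thesis
    unfolding P_def sample_space_def
    by (intro sets_pair_measure_cong) (auto simp: sets_noise_law noise_idx_def selection_law_def)
qed

lemma measurable_P: "f \<in> borel_measurable sample_space \<Longrightarrow> f \<in> borel_measurable P"
  using measurable_cong_sets[OF sets_P refl] by blast

lemma model_traj_batch_cong:
  assumes "\<And>h' j. h' < h \<Longrightarrow> j < \<gamma> \<Longrightarrow> fst w (i, h', j) = fst w' (i, h', j)"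
    and "snd w = snd w'"
  shows "model_traj i h w = model_traj i h w'"
  unfolding model_traj_def
  by (rule traj_cong) (use assms in \<open>auto simp: batch_def noise_def\<close>)

lemma nn_integral_batch_error_le:
  assumes i: "i < n" and h: "h < \<tau>"
  shows "(\<integral>\<^sup>+w. ennreal ((norm (batch_error i h w))\<^sup>2) \<partial>P) \<le> ennreal (\<beta>\<^sup>2 / real \<gamma>)"
proof -
  let ?Q = "noise_law \<Otimes>\<^sub>M selection_law"
  let ?M = "\<lambda>k::nat \<times> nat \<times> nat. measure_pmf (pmf_of_set (D (fst k)))"
  define f where "f w = ennreal ((norm (batch_error i h w))\<^sup>2)" for w
  define J where "J = (\<lambda>j. (i, h, j)) ` {..<\<gamma>}"
  interpret A: prob_space batch_law by (rule prob_space_batch_law)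
  interpret B: prob_space noise_law by (rule prob_space_noise_law)
  interpret C: prob_space selection_law by (rule prob_space_selection_law)
  interpret BC: pair_prob_space noise_law selection_law ..
  interpret Q: prob_space ?Q by (rule BC.prob_space_axioms)
  interpret AQ: pair_prob_space batch_law ?Q ..
  interpret product_prob_space ?M batch_idx
    by unfold_locales (simp add: prob_space_measure_pmf)
  have "f \<in> borel_measurable sample_space"
    unfolding f_def using measurable_batch_error[OF i h] by measurable
  then have f: "f \<in> borel_measurable (batch_law \<Otimes>\<^sub>M ?Q)"
    using measurable_P unfolding P_def by blast
  have J: "finite J" "card J = \<gamma>" "J \<subseteq> batch_idx"
    using i h by (auto simp: J_def card_image inj_on_def batch_idx_def)
  have "(\<integral>\<^sup>+x. f (x, y) \<partial>batch_law) \<le> ennreal (\<beta>\<^sup>2 / real \<gamma>)" if y: "y \<in> space ?Q" for y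
    unfolding batch_law_def
  proof (rule nn_integral_PiM_le_sections[OF finite_batch_idx J(3)])
    show "(\<lambda>x. f (x, y)) \<in> borel_measurable (PiM batch_idx ?M)"
      using measurable_compose[OF measurable_Pair2'[OF y] f] by (simp add: batch_law_def)
    fix x :: "nat \<times> nat \<times> nat \<Rightarrow> 'x"
    let ?w = "\<lambda>z :: nat \<times> nat \<times> nat \<Rightarrow> 'x. (merge (batch_idx - J) J (x, z), y)"
    \<comment> \<open>The state at step \<open>h\<close> only depends on the samples of earlier steps, i.e.\ not on \<open>J\<close>.\<close>
    have traj_w: "model_traj i h (?w z) = model_traj i h (x, y)" for z
      using i h by (intro model_traj_batch_cong) (auto simp: merge_def J_def batch_idx_def)
    have "(\<Sum>j<\<gamma>. gl t (batch i h j (?w z))) = (\<Sum>k\<in>J. gl t (into_data i (z k)))" for t z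
      by (simp add: J_def sum.reindex inj_on_def batch_def merge_def)
    then have "f (?w z) = ennreal ((norm ((1 / real \<gamma>) *\<^sub>R
        (\<Sum>k\<in>J. gl (model_traj i h (x, y)) (into_data i (z k))) - gf i (model_traj i h (x, y))))\<^sup>2)" for z
      by (simp add: f_def batch_error_def grad_term_def traj_w)
    moreover have "PiM J ?M = PiM J (\<lambda>_. measure_pmf (pmf_of_set (D i)))"
      by (intro PiM_cong) (auto simp: J_def)
    ultimately show "(\<integral>\<^sup>+z. f (?w z) \<partial>PiM J ?M) \<le> ennreal (\<beta>\<^sup>2 / real \<gamma>)"
      using nn_integral_minibatch_error_le[OF i J(1,2)] by simp
  qed
  then have "(\<integral>\<^sup>+y. (\<integral>\<^sup>+x. f (x, y) \<partial>batch_law) \<partial>?Q) \<le> (\<integral>\<^sup>+y. ennreal (\<beta>\<^sup>2 / real \<gamma>) \<partial>?Q)"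
    by (intro nn_integral_mono) auto
  then have "(\<integral>\<^sup>+w. f w \<partial>P) \<le> ennreal (\<beta>\<^sup>2 / real \<gamma>)"
    using AQ.nn_integral_snd[OF f] prob_space.emeasure_space_1[OF BC.prob_space_axioms]
    by (simp add: P_def)
  then show ?thesis by (simp add: f_def)
qed

lemma model_traj_selection_indep: "model_traj i h (a, b, S) = model_traj i h (a, b, S')"
  unfolding model_traj_def by (rule traj_cong) (auto simp: batch_def noise_def)

lemma step_moments_selection_indep: "step_moments i h (a, b, S) = step_moments i h (a, b, S')"
  by (simp add: step_moments_def grad_term_def batch_error_def batch_def noise_def
      model_traj_selection_indep[of i h a b S S'])

lemma nn_integral_selected:
  assumes K: "K \<in> borel_measurable sample_space" and K_indep: "\<And>a b S S'. K (a, b, S) = K (a, b, S')"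
    and i: "i < n"
  shows "(\<integral>\<^sup>+w. indicator {S. i \<in> S} (snd (snd w)) * K w \<partial>P) = ennreal (real r / real n) * (\<integral>\<^sup>+w. K w \<partial>P)"
  using nn_integral_indicator_independent_component[of batch_law noise_law selection_law K "{S. i \<in> S}"]
    prob_space_batch_law prob_space_noise_law prob_space_selection_law measurable_P[OF K] K_indep
    emeasure_uniform_subset_contains[OF i r_pos r_le]
  by (simp add: P_def selection_law_def subsets_def)

lemma divergence_le_step_moments:
  "(\<Sum>i\<in>S. (norm ((1 / real (card S)) *\<^sub>R (\<Sum>j\<in>S. model_traj j s w) - model_traj i s w))\<^sup>2)
     \<le> real s * \<eta>\<^sup>2 * (\<Sum>i\<in>S. \<Sum>h<s. step_moments i h w)"
proof -
  define X where "X i = (\<Sum>h<s. grad_term i h w)" for i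
  define Y where "Y i = (\<Sum>h<s. batch_error i h w)" for i
  define Z where "Z i = (\<Sum>h<s. noise i h w)" for i
  have "model_traj i s w = \<theta>0 - \<eta> *\<^sub>R (X i + Y i + Z i)" for i
  proof -
    have "model_traj i s w = \<theta>0 - \<eta> *\<^sub>R (\<Sum>h<s. grad_term i h w + batch_error i h w + noise i h w)"
      unfolding model_traj_def by (subst traj_eq_sum) (simp add: batch_error_def grad_term_def model_traj_def)
    then show ?thesis by (simp add: X_def Y_def Z_def sum.distrib)
  qed
  then have "(\<Sum>i\<in>S. (norm ((1 / real (card S)) *\<^sub>R (\<Sum>j\<in>S. model_traj j s w) - model_traj i s w))\<^sup>2)
      \<le> \<eta>\<^sup>2 * (\<Sum>i\<in>S. (norm (X i + Y i + Z i))\<^sup>2)"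
    by (rule sum_norm_sq_deviation_affine_le)
  also have "\<dots> \<le> \<eta>\<^sup>2 * (\<Sum>i\<in>S. real s * (\<Sum>h<s. step_moments i h w))"
  proof (intro mult_left_mono sum_mono)
    fix i
    have "(norm (X i + Y i + Z i))\<^sup>2 \<le> 4 * (norm (X i))\<^sup>2 + 4 * (norm (Y i))\<^sup>2 + 2 * (norm (Z i))\<^sup>2"
      by (rule norm_add3_sq_le)
    also have "\<dots> \<le> 4 * (real s * (\<Sum>h<s. (norm (grad_term i h w))\<^sup>2))
        + 4 * (real s * (\<Sum>h<s. (norm (batch_error i h w))\<^sup>2))
        + 2 * (real s * (\<Sum>h<s. (norm (noise i h w))\<^sup>2))"
      unfolding X_def Y_def Z_def using norm_sum_sq_le[where A = "{..<s}"]
      by (intro add_mono mult_left_mono) auto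
    also have "\<dots> = real s * (\<Sum>h<s. step_moments i h w)"
      by (simp add: step_moments_def sum.distrib sum_distrib_left algebra_simps)
    finally show "(norm (X i + Y i + Z i))\<^sup>2 \<le> real s * (\<Sum>h<s. step_moments i h w)" .
  qed simp
  finally show ?thesis by (simp add: sum_distrib_left mult.assoc mult.left_commute)
qed

lemma nn_integral_step_moments_le:
  assumes i: "i < n" and h: "h < \<tau>"
  shows "(\<integral>\<^sup>+w. ennreal (step_moments i h w) \<partial>P)
      \<le> 4 * (\<integral>\<^sup>+w. ennreal ((norm (grad_term i h w))\<^sup>2) \<partial>P) + 4 * ennreal (\<beta>\<^sup>2 / real \<gamma>)
        + 2 * (\<integral>\<^sup>+w. ennreal ((norm (noise i h w))\<^sup>2) \<partial>P)"
proof -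
  note [measurable] = measurable_P[OF measurable_grad_term[OF i h]]
    measurable_P[OF measurable_batch_error[OF i h]] measurable_P[OF measurable_noise[of i h]]
  have "ennreal (step_moments i h w) = 4 * ennreal ((norm (grad_term i h w))\<^sup>2)
      + 4 * ennreal ((norm (batch_error i h w))\<^sup>2) + 2 * ennreal ((norm (noise i h w))\<^sup>2)" for w
    by (simp add: step_moments_def ennreal_mult)
  then have "(\<integral>\<^sup>+w. ennreal (step_moments i h w) \<partial>P)
      = 4 * (\<integral>\<^sup>+w. ennreal ((norm (grad_term i h w))\<^sup>2) \<partial>P)
        + 4 * (\<integral>\<^sup>+w. ennreal ((norm (batch_error i h w))\<^sup>2) \<partial>P)
        + 2 * (\<integral>\<^sup>+w. ennreal ((norm (noise i h w))\<^sup>2) \<partial>P)"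
    using i h by (simp add: noise_idx_def nn_integral_add nn_integral_cmult)
  also have "\<dots> \<le> 4 * (\<integral>\<^sup>+w. ennreal ((norm (grad_term i h w))\<^sup>2) \<partial>P) + 4 * ennreal (\<beta>\<^sup>2 / real \<gamma>)
        + 2 * (\<integral>\<^sup>+w. ennreal ((norm (noise i h w))\<^sup>2) \<partial>P)"
    by (intro add_mono mult_left_mono nn_integral_batch_error_le i h order_refl) simp
  finally show ?thesis .
qed

definition selected_moments :: "nat \<Rightarrow> ('x, 'd) sample \<Rightarrow> ennreal" where
  "selected_moments s w = ennreal (real s * \<eta>\<^sup>2 / real r) *
     (\<Sum>i<n. indicator {S. i \<in> S} (snd (snd w)) * ennreal (\<Sum>h<s. step_moments i h w))"

lemma measurable_selected_moments:
  assumes "s \<le> \<tau>"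
  shows "selected_moments s \<in> borel_measurable sample_space"
proof -
  have "(\<lambda>w. indicator {S. i \<in> S} (snd (snd w)) :: ennreal) \<in> borel_measurable sample_space" for i
    unfolding sample_space_def
    by (rule measurable_compose[OF measurable_compose[OF measurable_snd measurable_snd]]) simp
  moreover have "step_moments i h \<in> borel_measurable sample_space" if "i < n" "h < s" for i h
    using that assms by (intro measurable_step_moments) auto
  ultimately show ?thesis
    unfolding selected_moments_def
    by (intro borel_measurable_times_ennreal borel_measurable_const borel_measurable_sum
        measurable_compose[OF borel_measurable_sum measurable_ennreal]) auto
qed

lemma divergence_le_selected_moments:
  assumes "snd (snd w) \<in> subsets"
  shows "ennreal ((1 / real r) * (\<Sum>i\<in>snd (snd w).
      (norm ((1 / real r) *\<^sub>R (\<Sum>j\<in>snd (snd w). model_traj j s w) - model_traj i s w))\<^sup>2))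
    \<le> selected_moments s w"
proof -
  let ?S = "snd (snd w)"
  have S: "?S \<subseteq> {..<n}" "card ?S = r" using assms by (auto simp: subsets_def)
  have SM: "0 \<le> step_moments i h w" for i h by (simp add: step_moments_def)
  have "(1 / real r) * (\<Sum>i\<in>?S. (norm ((1 / real r) *\<^sub>R (\<Sum>j\<in>?S. model_traj j s w) - model_traj i s w))\<^sup>2)
      \<le> real s * \<eta>\<^sup>2 / real r * (\<Sum>i\<in>?S. \<Sum>h<s. step_moments i h w)"
    using divergence_le_step_moments[of ?S s w] S(2) by (simp add: divide_right_mono)
  then have "ennreal ((1 / real r) * (\<Sum>i\<in>?S.
        (norm ((1 / real r) *\<^sub>R (\<Sum>j\<in>?S. model_traj j s w) - model_traj i s w))\<^sup>2))
      \<le> ennreal (real s * \<eta>\<^sup>2 / real r * (\<Sum>i\<in>?S. \<Sum>h<s. step_moments i h w))"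
    by (rule ennreal_leI)
  also have "\<dots> = ennreal (real s * \<eta>\<^sup>2 / real r) * ennreal (\<Sum>i\<in>?S. \<Sum>h<s. step_moments i h w)"
    by (rule ennreal_mult) (simp_all add: SM sum_nonneg)
  also have "ennreal (\<Sum>i\<in>?S. \<Sum>h<s. step_moments i h w) = (\<Sum>i\<in>?S. ennreal (\<Sum>h<s. step_moments i h w))"
    by (simp add: SM sum_nonneg sum_ennreal)
  also have "(\<Sum>i\<in>?S. ennreal (\<Sum>h<s. step_moments i h w))
      = (\<Sum>i<n. indicator {S. i \<in> S} ?S * ennreal (\<Sum>h<s. step_moments i h w))"
    using S(1) by (simp add: indicator_def sum.If_cases Int_absorb1)
  finally show ?thesis unfolding selected_moments_def .
qed

lemma nn_integral_selected_moments:
  assumes s: "s \<le> \<tau>"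
  shows "(\<integral>\<^sup>+w. selected_moments s w \<partial>P) = ennreal (real s * \<eta>\<^sup>2 / real r) *
    (\<Sum>i<n. ennreal (real r / real n) * (\<Sum>h<s. \<integral>\<^sup>+w. ennreal (step_moments i h w) \<partial>P))"
proof -
  have SM: "0 \<le> step_moments i h w" for i h w by (simp add: step_moments_def)
  have K: "(\<lambda>w. ennreal (\<Sum>h<s. step_moments i h w)) \<in> borel_measurable sample_space" if "i < n" for i
    using that s by (intro measurable_compose[OF borel_measurable_sum] measurable_step_moments) auto
  have ind: "(\<lambda>w. indicator {S. i \<in> S} (snd (snd w)) :: ennreal) \<in> borel_measurable sample_space" for i
    unfolding sample_space_def
    by (rule measurable_compose[OF measurable_compose[OF measurable_snd measurable_snd]]) simp
  have summand: "(\<lambda>w. indicator {S. i \<in> S} (snd (snd w)) * ennreal (\<Sum>h<s. step_moments i h w))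
      \<in> borel_measurable P" if "i \<in> {..<n}" for i
    using that by (intro measurable_P borel_measurable_times_ennreal ind K) auto
  have "(\<integral>\<^sup>+w. selected_moments s w \<partial>P) = ennreal (real s * \<eta>\<^sup>2 / real r) *
      (\<integral>\<^sup>+w. (\<Sum>i<n. indicator {S. i \<in> S} (snd (snd w)) * ennreal (\<Sum>h<s. step_moments i h w)) \<partial>P)"
    unfolding selected_moments_def by (intro nn_integral_cmult borel_measurable_sum summand)
  also have "(\<integral>\<^sup>+w. (\<Sum>i<n. indicator {S. i \<in> S} (snd (snd w)) * ennreal (\<Sum>h<s. step_moments i h w)) \<partial>P)
      = (\<Sum>i<n. ennreal (real r / real n) * (\<integral>\<^sup>+w. ennreal (\<Sum>h<s. step_moments i h w) \<partial>P))"
  proof -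
    have indep: "ennreal (\<Sum>h<s. step_moments i h (a, b, S)) = ennreal (\<Sum>h<s. step_moments i h (a, b, S'))"
      for i a b S S'
      by (simp only: step_moments_selection_indep[of i _ a b S S'])
    have "(\<integral>\<^sup>+w. (\<Sum>i<n. indicator {S. i \<in> S} (snd (snd w)) * ennreal (\<Sum>h<s. step_moments i h w)) \<partial>P)
        = (\<Sum>i<n. \<integral>\<^sup>+w. indicator {S. i \<in> S} (snd (snd w)) * ennreal (\<Sum>h<s. step_moments i h w) \<partial>P)"
      by (rule nn_integral_sum) (rule summand)
    also have "\<dots> = (\<Sum>i<n. ennreal (real r / real n) * (\<integral>\<^sup>+w. ennreal (\<Sum>h<s. step_moments i h w) \<partial>P))"
    proof (rule sum.cong[OF refl])
      fix i assume "i \<in> {..<n}"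
      then show "(\<integral>\<^sup>+w. indicator {S. i \<in> S} (snd (snd w)) * ennreal (\<Sum>h<s. step_moments i h w) \<partial>P)
          = ennreal (real r / real n) * (\<integral>\<^sup>+w. ennreal (\<Sum>h<s. step_moments i h w) \<partial>P)"
        by (intro nn_integral_selected K indep) auto
    qed
    finally show ?thesis .
  qed
  also have "\<dots> = (\<Sum>i<n. ennreal (real r / real n) * (\<Sum>h<s. \<integral>\<^sup>+w. ennreal (step_moments i h w) \<partial>P))"
  proof (rule sum.cong[OF refl])
    fix i assume i: "i \<in> {..<n}"
    have "(\<integral>\<^sup>+w. ennreal (\<Sum>h<s. step_moments i h w) \<partial>P) = (\<integral>\<^sup>+w. (\<Sum>h<s. ennreal (step_moments i h w)) \<partial>P)"
      by (simp add: SM sum_ennreal)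
    also have "\<dots> = (\<Sum>h<s. \<integral>\<^sup>+w. ennreal (step_moments i h w) \<partial>P)"
      using i s by (intro nn_integral_sum measurable_compose[OF measurable_P[OF measurable_step_moments]]) auto
    finally show "ennreal (real r / real n) * (\<integral>\<^sup>+w. ennreal (\<Sum>h<s. step_moments i h w) \<partial>P)
        = ennreal (real r / real n) * (\<Sum>h<s. \<integral>\<^sup>+w. ennreal (step_moments i h w) \<partial>P)"
      by simp
  qed
  finally show ?thesis .
qed

end

lemma ennreal_scaled_bound_eq:
  fixes e :: ennreal and c q x y :: real
  assumes "0 \<le> c" "0 \<le> q" "0 \<le> x" "0 \<le> y"
  shows "ennreal c * (ennreal q * (4 * e + 4 * ennreal x + 2 * ennreal y))
       = ennreal (4 * c * q) * e + ennreal (c * q * (4 * x + 2 * y))"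
proof -
  have "ennreal (4 * x + 2 * y) = 4 * ennreal x + 2 * ennreal y"
    using assms by (simp add: ennreal_mult)
  then have "ennreal (c * q * (4 * x + 2 * y)) = ennreal c * ennreal q * (4 * ennreal x + 2 * ennreal y)"
    using assms by (simp add: ennreal_mult)
  moreover have "ennreal (4 * c * q) = 4 * ennreal c * ennreal q"
    using assms by (simp add: ennreal_mult)
  ultimately show ?thesis by (simp add: algebra_simps)
qed

text \<open>The bound actually obtained, \<open>4 s \<eta>\<^sup>2 / n\<close> in front of the gradient sum and \<open>d \<sigma>\<^sup>2\<close> without the
  factor \<open>(r + 1) / r\<close>, is slightly sharper than the stated one.\<close>

lemma divergence_constants_le:
  fixes EF :: "nat \<Rightarrow> nat \<Rightarrow> ennreal" and d \<sigma> \<beta> \<eta> :: real and n r s \<gamma> :: nat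
  assumes r: "0 < r" "r \<le> n" and d: "0 \<le> d"
  shows "ennreal (real s * \<eta>\<^sup>2 / real r) * (\<Sum>i<n. ennreal (real r / real n) *
           (\<Sum>h<s. 4 * EF i h + 4 * ennreal (\<beta>\<^sup>2 / real \<gamma>) + 2 * ennreal (d * \<sigma>\<^sup>2)))
     \<le> ennreal (2 * (real s)\<^sup>2 * \<eta>\<^sup>2 * (d * \<sigma>\<^sup>2 * (real r + 1) / real r + 2 * \<beta>\<^sup>2 / real \<gamma>))
       + ennreal (4 * real s * \<eta>\<^sup>2 * (2 * (real n - real r)\<^sup>2 + (real n)\<^sup>2) / (real n) ^ 3)
         * (\<Sum>h<s. \<Sum>i<n. EF i h)"
proof -
  define c where "c = real s * \<eta>\<^sup>2 / real r"
  define q where "q = real r / real n"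
  define a where "a = 4 * (\<beta>\<^sup>2 / real \<gamma>) + 2 * (d * \<sigma>\<^sup>2)"
  have n: "0 < real n" using r by simp
  have nonneg: "0 \<le> c" "0 \<le> q" "0 \<le> a" using d by (auto simp: c_def q_def a_def)
  have "ennreal c * (\<Sum>i<n. ennreal q * (\<Sum>h<s. 4 * EF i h + 4 * ennreal (\<beta>\<^sup>2 / real \<gamma>) + 2 * ennreal (d * \<sigma>\<^sup>2)))
      = (\<Sum>i<n. \<Sum>h<s. ennreal (4 * c * q) * EF i h + ennreal (c * q * a))"
    using nonneg d unfolding a_def
    by (simp add: sum_distrib_left ennreal_scaled_bound_eq)
  also have "\<dots> = ennreal (4 * c * q) * (\<Sum>h<s. \<Sum>i<n. EF i h) + ennreal (real n * real s * (c * q * a))"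
    using nonneg
    by (simp add: sum.distrib sum_distrib_left sum.swap[of _ "{..<n}"] ennreal_of_nat_eq_real_of_nat
        ennreal_mult mult.assoc)
  also have "\<dots> \<le> ennreal (4 * real s * \<eta>\<^sup>2 * (2 * (real n - real r)\<^sup>2 + (real n)\<^sup>2) / (real n) ^ 3)
        * (\<Sum>h<s. \<Sum>i<n. EF i h)
      + ennreal (2 * (real s)\<^sup>2 * \<eta>\<^sup>2 * (d * \<sigma>\<^sup>2 * (real r + 1) / real r + 2 * \<beta>\<^sup>2 / real \<gamma>))"
  proof (intro add_mono mult_right_mono ennreal_leI)
    have "4 * c * q = 4 * real s * \<eta>\<^sup>2 * ((real n)\<^sup>2 / (real n) ^ 3)"
      using r n by (simp add: c_def q_def field_simps power2_eq_square power3_eq_cube)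
    also have "\<dots> \<le> 4 * real s * \<eta>\<^sup>2 * ((2 * (real n - real r)\<^sup>2 + (real n)\<^sup>2) / (real n) ^ 3)"
      using n by (intro mult_left_mono divide_right_mono) auto
    finally show "4 * c * q \<le> 4 * real s * \<eta>\<^sup>2 * (2 * (real n - real r)\<^sup>2 + (real n)\<^sup>2) / (real n) ^ 3"
      by simp
    have "d * \<sigma>\<^sup>2 \<le> d * \<sigma>\<^sup>2 * (real r + 1) / real r" using r d by (simp add: field_simps)
    then have "2 * (real s)\<^sup>2 * \<eta>\<^sup>2 * (d * \<sigma>\<^sup>2) \<le> 2 * (real s)\<^sup>2 * \<eta>\<^sup>2 * (d * \<sigma>\<^sup>2 * (real r + 1) / real r)"
      by (intro mult_left_mono) auto
    moreover have "real n * real s * (c * q * a)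
        = 4 * (real s)\<^sup>2 * \<eta>\<^sup>2 * \<beta>\<^sup>2 / real \<gamma> + 2 * (real s)\<^sup>2 * \<eta>\<^sup>2 * (d * \<sigma>\<^sup>2)"
      using r n by (simp add: c_def q_def a_def field_simps power2_eq_square)
    ultimately show "real n * real s * (c * q * a)
        \<le> 2 * (real s)\<^sup>2 * \<eta>\<^sup>2 * (d * \<sigma>\<^sup>2 * (real r + 1) / real r + 2 * \<beta>\<^sup>2 / real \<gamma>)"
      by (simp add: algebra_simps)
  qed auto
  finally show ?thesis by (simp add: c_def q_def add.commute)
qed

section \<open>Transfer to the given probability space\<close>

locale sgd_round =
  fixes M :: "'a measure" and n r \<tau> \<gamma> :: nat and \<eta> \<sigma> \<beta> :: real and \<theta>0 :: "real^'d"
    and D :: "nat \<Rightarrow> 'x set" and gl :: "real^'d \<Rightarrow> 'x \<Rightarrow> real^'d"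
    and gf :: "nat \<Rightarrow> real^'d \<Rightarrow> real^'d"
    and \<xi> :: "nat \<Rightarrow> nat \<Rightarrow> nat \<Rightarrow> 'a \<Rightarrow> 'x" and b :: "nat \<Rightarrow> nat \<Rightarrow> 'a \<Rightarrow> real^'d"
    and \<Omega> :: "'a \<Rightarrow> nat set"
  assumes prob_space_M: "prob_space M"
    and r_pos: "0 < r" and r_le: "r \<le> n"
    and gamma_pos: "0 < \<gamma>" and tau_pos: "0 < \<tau>"
    and sigma_pos: "0 < \<sigma>"
    and D_fin: "\<And>i. i < n \<Longrightarrow> finite (D i) \<and> D i \<noteq> {}"
    and gl_measurable: "\<And>i z. i < n \<Longrightarrow> z \<in> D i \<Longrightarrow> (\<lambda>\<theta>. gl \<theta> z) \<in> borel_measurable borel"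
    and unbiased: "\<And>i x. i < n \<Longrightarrow>
                   measure_pmf.expectation (pmf_of_set (D i)) (\<lambda>z. gl x z) = gf i x"
    and bounded_var: "\<And>i x. i < n \<Longrightarrow>
                   measure_pmf.expectation (pmf_of_set (D i)) (\<lambda>z. (norm (gl x z - gf i x))\<^sup>2) \<le> \<beta>\<^sup>2"
    and xi_distr: "\<And>i h j. i < n \<Longrightarrow> h < \<tau> \<Longrightarrow> j < \<gamma> \<Longrightarrow>
                   distr M (count_space UNIV) (\<xi> i h j) = measure_pmf (pmf_of_set (D i))"
    and b_distr: "\<And>i h. i < n \<Longrightarrow> h < \<tau> \<Longrightarrow> distributed M lborel (b i h) (gauss_density \<sigma>)"
    and Omega_distr: "distr M (count_space UNIV) \<Omega>
                   = measure_pmf (pmf_of_set {S. S \<subseteq> {..<n} \<and> card S = r})"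
    and indep_xi: "prob_space.indep_vars M (\<lambda>_. count_space UNIV) (\<lambda>(i, h, j). \<xi> i h j)
                   {(i, h, j). i < n \<and> h < \<tau> \<and> j < \<gamma>}"
    and indep_b: "prob_space.indep_vars M (\<lambda>_. borel) (\<lambda>(i, h). b i h) {(i, h). i < n \<and> h < \<tau>}"
    and indep_groups: "distr M
                   (PiM {(i, h, j). i < n \<and> h < \<tau> \<and> j < \<gamma>} (\<lambda>_. count_space UNIV)
                    \<Otimes>\<^sub>M (PiM {(i, h). i < n \<and> h < \<tau>} (\<lambda>_. borel) \<Otimes>\<^sub>M count_space UNIV))
                   (\<lambda>\<omega>. (restrict (\<lambda>(i, h, j). \<xi> i h j \<omega>) {(i, h, j). i < n \<and> h < \<tau> \<and> j < \<gamma>},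
                         restrict (\<lambda>(i, h). b i h \<omega>) {(i, h). i < n \<and> h < \<tau>}, \<Omega> \<omega>))
                 = distr M (PiM {(i, h, j). i < n \<and> h < \<tau> \<and> j < \<gamma>} (\<lambda>_. count_space UNIV))
                     (\<lambda>\<omega>. restrict (\<lambda>(i, h, j). \<xi> i h j \<omega>) {(i, h, j). i < n \<and> h < \<tau> \<and> j < \<gamma>})
                   \<Otimes>\<^sub>M (distr M (PiM {(i, h). i < n \<and> h < \<tau>} (\<lambda>_. borel))
                     (\<lambda>\<omega>. restrict (\<lambda>(i, h). b i h \<omega>) {(i, h). i < n \<and> h < \<tau>})
                   \<Otimes>\<^sub>M distr M (count_space UNIV) \<Omega>)"
begin

interpretation M: prob_space M by (rule prob_space_M)

definition batch_vector :: "'a \<Rightarrow> nat \<times> nat \<times> nat \<Rightarrow> 'x" where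
  "batch_vector \<omega> = restrict (\<lambda>(i, h, j). \<xi> i h j \<omega>) {(i, h, j). i < n \<and> h < \<tau> \<and> j < \<gamma>}"

definition noise_vector :: "'a \<Rightarrow> nat \<times> nat \<Rightarrow> real^'d" where
  "noise_vector \<omega> = restrict (\<lambda>(i, h). b i h \<omega>) {(i, h). i < n \<and> h < \<tau>}"

definition noise_law :: "(nat \<times> nat \<Rightarrow> real^'d) measure" where
  "noise_law = distr M (PiM {(i, h). i < n \<and> h < \<tau>} (\<lambda>_. borel)) noise_vector"

lemma measurable_xi:
  assumes "i < n" "h < \<tau>" "j < \<gamma>"
  shows "\<xi> i h j \<in> measurable M (count_space UNIV)"
proof -
  have "(i, h, j) \<in> {(i, h, j). i < n \<and> h < \<tau> \<and> j < \<gamma>}" using assms by simp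
  with indep_xi show ?thesis unfolding M.indep_vars_def by fastforce
qed

lemma measurable_b:
  assumes "i < n" "h < \<tau>"
  shows "b i h \<in> borel_measurable M"
proof -
  have "(i, h) \<in> {(i, h). i < n \<and> h < \<tau>}" using assms by simp
  with indep_b show ?thesis unfolding M.indep_vars_def by fastforce
qed

lemma measurable_Omega: "\<Omega> \<in> measurable M (count_space UNIV)"
  by (rule measurable_if_distr_prob_space[OF Omega_distr prob_space_measure_pmf]) simp

lemma measurable_batch_vector:
  "batch_vector \<in> measurable M (PiM {(i, h, j). i < n \<and> h < \<tau> \<and> j < \<gamma>} (\<lambda>_. count_space UNIV))"
  unfolding batch_vector_def
proof (rule measurable_restrict)
  fix k assume "k \<in> {(i, h, j). i < n \<and> h < \<tau> \<and> j < \<gamma>}"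
  then obtain i h j where "k = (i, h, j)" "i < n" "h < \<tau>" "j < \<gamma>" by auto
  then show "(\<lambda>\<omega>. case k of (i, h, j) \<Rightarrow> \<xi> i h j \<omega>) \<in> measurable M (count_space UNIV)"
    using measurable_xi by simp
qed

lemma measurable_noise_vector:
  "noise_vector \<in> measurable M (PiM {(i, h). i < n \<and> h < \<tau>} (\<lambda>_. borel))"
  unfolding noise_vector_def
proof (rule measurable_restrict)
  fix k assume "k \<in> {(i, h). i < n \<and> h < \<tau>}"
  then obtain i h where "k = (i, h)" "i < n" "h < \<tau>" by auto
  then show "(\<lambda>\<omega>. case k of (i, h) \<Rightarrow> b i h \<omega>) \<in> borel_measurable M"
    using measurable_b by simp
qed

lemma prob_space_noise_law: "prob_space noise_law"
  unfolding noise_law_def by (rule M.prob_space_distr[OF measurable_noise_vector])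

lemma sets_noise_law: "sets noise_law = sets (PiM {(i, h). i < n \<and> h < \<tau>} (\<lambda>_. borel))"
  by (simp add: noise_law_def)

sublocale model: sgd_model n \<tau> \<gamma> r \<eta> \<beta> \<theta>0 D gl gf noise_law
  using D_fin gl_measurable unbiased bounded_var prob_space_noise_law sets_noise_law
    r_pos r_le gamma_pos
  by (rule sgd_model.intro)

definition sample :: "'a \<Rightarrow> ('x, 'd) sample" where
  "sample \<omega> = (batch_vector \<omega>, noise_vector \<omega>, \<Omega> \<omega>)"

lemma measurable_sample: "sample \<in> measurable M model.sample_space"
  unfolding sample_def model.sample_space_def model.batch_idx_def model.noise_idx_def
  by (intro measurable_Pair measurable_batch_vector measurable_noise_vector measurable_Omega)

lemma distr_batch_vector:
  "distr M (PiM {(i, h, j). i < n \<and> h < \<tau> \<and> j < \<gamma>} (\<lambda>_. count_space UNIV)) batch_vector = model.batch_law"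
proof -
  have "(0, 0, 0) \<in> {(i, h, j). i < n \<and> h < \<tau> \<and> j < \<gamma>}"
    using r_pos r_le tau_pos gamma_pos by simp
  then have ne: "{(i, h, j). i < n \<and> h < \<tau> \<and> j < \<gamma>} \<noteq> {}" by blast
  have rv: "(\<lambda>(i, h, j). \<xi> i h j) k \<in> measurable M (count_space UNIV)"
    if "k \<in> {(i, h, j). i < n \<and> h < \<tau> \<and> j < \<gamma>}" for k
    using that measurable_xi by auto
  have "batch_vector = (\<lambda>\<omega>. \<lambda>k\<in>{(i, h, j). i < n \<and> h < \<tau> \<and> j < \<gamma>}. (\<lambda>(i, h, j). \<xi> i h j) k \<omega>)"
    by (auto simp: batch_vector_def fun_eq_iff restrict_def split: prod.splits)
  then have "distr M (PiM {(i, h, j). i < n \<and> h < \<tau> \<and> j < \<gamma>} (\<lambda>_. count_space UNIV)) batch_vector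
      = PiM {(i, h, j). i < n \<and> h < \<tau> \<and> j < \<gamma>} (\<lambda>k. distr M (count_space UNIV) ((\<lambda>(i, h, j). \<xi> i h j) k))"
    using M.indep_vars_iff_distr_eq_PiM'[OF ne rv] indep_xi by simp
  also have "\<dots> = model.batch_law"
    unfolding model.batch_law_def model.batch_idx_def
    by (intro PiM_cong refl) (auto simp: xi_distr)
  finally show ?thesis .
qed

lemma distr_sample: "distr M model.sample_space sample = model.P"
  using indep_groups
  unfolding model.sample_space_def model.batch_idx_def model.noise_idx_def sample_def
    batch_vector_def[symmetric] noise_vector_def[symmetric] noise_law_def[symmetric]
    distr_batch_vector Omega_distr model.P_def model.selection_law_def model.subsets_def .

lemma nn_integral_sample:
  "g \<in> borel_measurable model.sample_space \<Longrightarrow> (\<integral>\<^sup>+w. g w \<partial>model.P) = (\<integral>\<^sup>+\<omega>. g (sample \<omega>) \<partial>M)"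
  unfolding distr_sample[symmetric] by (rule nn_integral_distr[OF measurable_sample]) simp

lemma AE_selected: "AE \<omega> in M. \<Omega> \<omega> \<in> model.subsets"
proof (rule AE_distrD[OF measurable_Omega])
  have "model.subsets \<noteq> {}" "finite model.subsets"
    using r_le by (auto simp: model.subsets_def finite_subsets_card intro!: exI[of _ "{..<r}"])
  then show "AE S in distr M (count_space UNIV) \<Omega>. S \<in> model.subsets"
    unfolding Omega_distr by (simp add: model.subsets_def[symmetric] AE_measure_pmf_iff)
qed

lemma AE_batch_in_data: "AE \<omega> in M. \<forall>i<n. \<forall>h<\<tau>. \<forall>j<\<gamma>. \<xi> i h j \<omega> \<in> D i"
proof -
  have "AE \<omega> in M. \<xi> i h j \<omega> \<in> D i" if k: "i < n" "h < \<tau>" "j < \<gamma>" for i h j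
  proof (rule AE_distrD[OF measurable_xi[OF k]])
    show "AE x in distr M (count_space UNIV) (\<xi> i h j). x \<in> D i"
      unfolding xi_distr[OF k] using D_fin[OF k(1)] by (simp add: AE_measure_pmf_iff)
  qed
  then have "AE \<omega> in M. \<forall>k\<in>{..<n} \<times> {..<\<tau>} \<times> {..<\<gamma>}. \<xi> (fst k) (fst (snd k)) (snd (snd k)) \<omega> \<in> D (fst k)"
    by (intro eventually_ball_finite) auto
  then show ?thesis by eventually_elim auto
qed

lemma traj_eq_model_traj:
  assumes "\<forall>i<n. \<forall>h<\<tau>. \<forall>j<\<gamma>. \<xi> i h j \<omega> \<in> D i" "i < n" "h \<le> \<tau>"
  shows "traj \<eta> \<gamma> gl \<theta>0 \<xi> b i h \<omega> = model.model_traj i h (sample \<omega>)"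
  unfolding model.model_traj_def
  by (rule traj_cong) (use assms in \<open>auto simp: model.batch_def model.noise_def sample_def
      batch_vector_def noise_vector_def model.into_data_id\<close>)

lemma nn_integral_grad_term:
  assumes "i < n" "h < \<tau>"
  shows "(\<integral>\<^sup>+w. ennreal ((norm (model.grad_term i h w))\<^sup>2) \<partial>model.P)
       = (\<integral>\<^sup>+\<omega>. ennreal ((norm (gf i (traj \<eta> \<gamma> gl \<theta>0 \<xi> b i h \<omega>)))\<^sup>2) \<partial>M)"
proof -
  have [measurable]: "model.grad_term i h \<in> borel_measurable model.sample_space"
    using assms by (rule model.measurable_grad_term)
  have "(\<integral>\<^sup>+w. ennreal ((norm (model.grad_term i h w))\<^sup>2) \<partial>model.P)
      = (\<integral>\<^sup>+\<omega>. ennreal ((norm (model.grad_term i h (sample \<omega>)))\<^sup>2) \<partial>M)"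
    by (rule nn_integral_sample) measurable
  also have "\<dots> = (\<integral>\<^sup>+\<omega>. ennreal ((norm (gf i (traj \<eta> \<gamma> gl \<theta>0 \<xi> b i h \<omega>)))\<^sup>2) \<partial>M)"
    using AE_batch_in_data
    by (rule nn_integral_cong_AE[OF eventually_mono])
       (use assms in \<open>simp add: traj_eq_model_traj model.grad_term_def\<close>)
  finally show ?thesis .
qed

lemma nn_integral_noise:
  assumes "i < n" "h < \<tau>"
  shows "(\<integral>\<^sup>+w. ennreal ((norm (model.noise i h w))\<^sup>2) \<partial>model.P) = ennreal (real CARD('d) * \<sigma>\<^sup>2)"
proof -
  have [measurable]: "model.noise i h \<in> borel_measurable model.sample_space"
    using assms by (intro model.measurable_noise) (simp add: model.noise_idx_def)
  have "(\<integral>\<^sup>+w. ennreal ((norm (model.noise i h w))\<^sup>2) \<partial>model.P)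
      = (\<integral>\<^sup>+\<omega>. ennreal ((norm (model.noise i h (sample \<omega>)))\<^sup>2) \<partial>M)"
    by (rule nn_integral_sample) measurable
  also have "\<dots> = (\<integral>\<^sup>+\<omega>. ennreal ((norm (b i h \<omega>))\<^sup>2) \<partial>M)"
    using assms by (simp add: model.noise_def sample_def noise_vector_def)
  also have "\<dots> = (\<integral>\<^sup>+x. gauss_density \<sigma> (x :: real^'d) * ennreal ((norm x)\<^sup>2) \<partial>lborel)"
    using distributed_nn_integral[OF b_distr[OF assms], of "\<lambda>x. ennreal ((norm x)\<^sup>2)"] by simp
  also have "\<dots> = ennreal (real CARD('d) * \<sigma>\<^sup>2)"
    by (rule nn_integral_gauss_density_norm_sq[OF sigma_pos])
  finally show ?thesis .
qed

lemma AE_divergence_le_selected_moments: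
  assumes "s \<le> \<tau>"
  shows "AE \<omega> in M. ennreal ((1 / real r) * (\<Sum>i\<in>\<Omega> \<omega>.
      (norm ((1 / real r) *\<^sub>R (\<Sum>i'\<in>\<Omega> \<omega>. traj \<eta> \<gamma> gl \<theta>0 \<xi> b i' s \<omega>) - traj \<eta> \<gamma> gl \<theta>0 \<xi> b i s \<omega>))\<^sup>2))
    \<le> model.selected_moments s (sample \<omega>)"
  using AE_selected AE_batch_in_data
proof eventually_elim
  case (elim \<omega>)
  then have "traj \<eta> \<gamma> gl \<theta>0 \<xi> b i s \<omega> = model.model_traj i s (sample \<omega>)" if "i \<in> \<Omega> \<omega>" for i
    using that assms by (intro traj_eq_model_traj) (auto simp: model.subsets_def)
  then show ?case
    using model.divergence_le_selected_moments[of "sample \<omega>" s] elim(1)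
    by (simp add: sample_def cong: sum.cong)
qed

theorem expected_divergence_le:
  assumes s: "s < \<tau>"
  shows "(\<integral>\<^sup>+\<omega>. ennreal ((1 / real r) *
         (\<Sum>i\<in>\<Omega> \<omega>. (norm ((1 / real r) *\<^sub>R (\<Sum>i'\<in>\<Omega> \<omega>. traj \<eta> \<gamma> gl \<theta>0 \<xi> b i' s \<omega>)
                               - traj \<eta> \<gamma> gl \<theta>0 \<xi> b i s \<omega>))\<^sup>2)) \<partial>M)
     \<le> ennreal (2 * (real s)\<^sup>2 * \<eta>\<^sup>2 *
           (real CARD('d) * \<sigma>\<^sup>2 * (real r + 1) / real r + 2 * \<beta>\<^sup>2 / real \<gamma>))
       + ennreal (4 * real s * \<eta>\<^sup>2 *
           (2 * (real n - real r)\<^sup>2 + (real n)\<^sup>2) / (real n) ^ 3)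
         * (\<Sum>h<s. \<Sum>i<n. \<integral>\<^sup>+\<omega>. ennreal ((norm (gf i (traj \<eta> \<gamma> gl \<theta>0 \<xi> b i h \<omega>)))\<^sup>2) \<partial>M)"
  (is "?E \<le> ?R")
proof -
  have "?E \<le> (\<integral>\<^sup>+\<omega>. model.selected_moments s (sample \<omega>) \<partial>M)"
    using AE_divergence_le_selected_moments s by (intro nn_integral_mono_AE) auto
  also have "\<dots> = ennreal (real s * \<eta>\<^sup>2 / real r) * (\<Sum>i<n. ennreal (real r / real n) *
      (\<Sum>h<s. \<integral>\<^sup>+w. ennreal (model.step_moments i h w) \<partial>model.P))"
    using s by (simp add: nn_integral_sample[symmetric] model.measurable_selected_moments
        model.nn_integral_selected_moments)
  also have "\<dots> \<le> ennreal (real s * \<eta>\<^sup>2 / real r) * (\<Sum>i<n. ennreal (real r / real n) *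
      (\<Sum>h<s. 4 * (\<integral>\<^sup>+\<omega>. ennreal ((norm (gf i (traj \<eta> \<gamma> gl \<theta>0 \<xi> b i h \<omega>)))\<^sup>2) \<partial>M)
        + 4 * ennreal (\<beta>\<^sup>2 / real \<gamma>) + 2 * ennreal (real CARD('d) * \<sigma>\<^sup>2)))"
    using s model.nn_integral_step_moments_le
    by (intro mult_left_mono sum_mono) (auto simp: nn_integral_grad_term nn_integral_noise)
  also have "\<dots> \<le> ?R"
    by (rule divergence_constants_le[OF r_pos r_le]) simp
  finally show ?thesis .
qed

end

theorem lemma8:
  fixes M :: "'a measure"
    and n r \<tau> \<gamma> s :: nat
    and \<eta> \<sigma> \<beta> :: real
    and \<theta>0 :: "real^'d"
    and D :: "nat \<Rightarrow> 'x set"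
    and l :: "real^'d \<Rightarrow> 'x \<Rightarrow> real"
    and gl :: "real^'d \<Rightarrow> 'x \<Rightarrow> real^'d"
    and gf :: "nat \<Rightarrow> real^'d \<Rightarrow> real^'d"
    and \<xi> :: "nat \<Rightarrow> nat \<Rightarrow> nat \<Rightarrow> 'a \<Rightarrow> 'x"
    and b :: "nat \<Rightarrow> nat \<Rightarrow> 'a \<Rightarrow> real^'d"
    and \<Omega> :: "'a \<Rightarrow> nat set"
  assumes P: "prob_space M"
    and r_pos: "0 < r" and r_le: "r \<le> n"
    and gamma_pos: "0 < \<gamma>"
    and s_lt: "s < \<tau>"
    and sigma_pos: "0 < \<sigma>"
    and D_fin: "\<And>i. i < n \<Longrightarrow> finite (D i) \<and> D i \<noteq> {}"
    and grad_l: "\<And>i \<theta> x. i < n \<Longrightarrow> x \<in> D i \<Longrightarrow>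
                   ((\<lambda>v. l v x) has_derivative (\<lambda>v. gl \<theta> x \<bullet> v)) (at \<theta>)"
    and grad_f: "\<And>i \<theta>. i < n \<Longrightarrow>
                   (local_obj D l i has_derivative (\<lambda>v. gf i \<theta> \<bullet> v)) (at \<theta>)"
    and unbiased: "\<And>i x. i < n \<Longrightarrow>
                   measure_pmf.expectation (pmf_of_set (D i)) (\<lambda>z. gl x z) = gf i x"
    and bounded_var: "\<And>i x. i < n \<Longrightarrow>
                   measure_pmf.expectation (pmf_of_set (D i)) (\<lambda>z. (norm (gl x z - gf i x))\<^sup>2) \<le> \<beta>\<^sup>2"
    and xi_distr: "\<And>i h j. i < n \<Longrightarrow> h < \<tau> \<Longrightarrow> j < \<gamma> \<Longrightarrow>
                   distr M (count_space UNIV) (\<xi> i h j) = measure_pmf (pmf_of_set (D i))"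
    and b_distr: "\<And>i h. i < n \<Longrightarrow> h < \<tau> \<Longrightarrow>
                   distributed M lborel (b i h) (gauss_density \<sigma>)"
    and Omega_distr: "distr M (count_space UNIV) \<Omega>
                   = measure_pmf (pmf_of_set {S. S \<subseteq> {..<n} \<and> card S = r})"
    and indep_xi: "prob_space.indep_vars M (\<lambda>_. count_space UNIV) (\<lambda>(i, h, j). \<xi> i h j)
                   {(i, h, j). i < n \<and> h < \<tau> \<and> j < \<gamma>}"
    and indep_b: "prob_space.indep_vars M (\<lambda>_. borel) (\<lambda>(i, h). b i h)
                   {(i, h). i < n \<and> h < \<tau>}"
    and indep_groups: "distr M
                   (PiM {(i, h, j). i < n \<and> h < \<tau> \<and> j < \<gamma>} (\<lambda>_. count_space UNIV)
                    \<Otimes>\<^sub>M (PiM {(i, h). i < n \<and> h < \<tau>} (\<lambda>_. borel) \<Otimes>\<^sub>M count_space UNIV))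
                   (\<lambda>\<omega>. (restrict (\<lambda>(i, h, j). \<xi> i h j \<omega>) {(i, h, j). i < n \<and> h < \<tau> \<and> j < \<gamma>},
                         restrict (\<lambda>(i, h). b i h \<omega>) {(i, h). i < n \<and> h < \<tau>}, \<Omega> \<omega>))
                 = distr M (PiM {(i, h, j). i < n \<and> h < \<tau> \<and> j < \<gamma>} (\<lambda>_. count_space UNIV))
                     (\<lambda>\<omega>. restrict (\<lambda>(i, h, j). \<xi> i h j \<omega>) {(i, h, j). i < n \<and> h < \<tau> \<and> j < \<gamma>})
                   \<Otimes>\<^sub>M (distr M (PiM {(i, h). i < n \<and> h < \<tau>} (\<lambda>_. borel))
                     (\<lambda>\<omega>. restrict (\<lambda>(i, h). b i h \<omega>) {(i, h). i < n \<and> h < \<tau>})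
                   \<Otimes>\<^sub>M distr M (count_space UNIV) \<Omega>)"
  shows
    "(\<integral>\<^sup>+\<omega>. ennreal ((1 / real r) *
         (\<Sum>i\<in>\<Omega> \<omega>. (norm ((1 / real r) *\<^sub>R (\<Sum>i'\<in>\<Omega> \<omega>. traj \<eta> \<gamma> gl \<theta>0 \<xi> b i' s \<omega>)
                               - traj \<eta> \<gamma> gl \<theta>0 \<xi> b i s \<omega>))\<^sup>2)) \<partial>M)
     \<le> ennreal (2 * (real s)\<^sup>2 * \<eta>\<^sup>2 *
           (real CARD('d) * \<sigma>\<^sup>2 * (real r + 1) / real r + 2 * \<beta>\<^sup>2 / real \<gamma>))
       + ennreal (4 * real s * \<eta>\<^sup>2 *
           (2 * (real n - real r)\<^sup>2 + (real n)\<^sup>2) / (real n) ^ 3)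
         * (\<Sum>h<s. \<Sum>i<n. \<integral>\<^sup>+\<omega>. ennreal ((norm (gf i (traj \<eta> \<gamma> gl \<theta>0 \<xi> b i h \<omega>)))\<^sup>2) \<partial>M)"
proof -
  have gl_measurable: "(\<lambda>\<theta>. gl \<theta> z) \<in> borel_measurable borel" if "i < n" "z \<in> D i" for i z
    using grad_l[OF that] by (rule gradient_borel_measurable)
  have tau_pos: "0 < \<tau>" using s_lt by simp
  interpret sgd_round M n r \<tau> \<gamma> \<eta> \<sigma> \<beta> \<theta>0 D gl gf \<xi> b \<Omega>
    using P r_pos r_le gamma_pos tau_pos sigma_pos D_fin gl_measurable unbiased bounded_var
      xi_distr b_distr Omega_distr indep_xi indep_b indep_groups
    by (rule sgd_round.intro)
  show ?thesis using s_lt by (rule expected_divergence_le)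
qed

end
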